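(* Let $G=(V,E)$ be a connected undirected graph with $V=\{1,\dots,N\}$, let $K\ge2$, $d\ge0$ an integer, $\gamma\in(0,1]$, and let every agent run Exp3-Coop (defined in the context) with delay $d$ and learning rate $\eta=\gamma/(Ke(d+1))$. Then for every $T\ge1$ and every fixed (oblivious) sequence of loss vectors $\boldsymbol\ell_1,\dots,\boldsymbol\ell_T\in[0,1]^K$, $$R_T^{\mathrm{coop}}\le 2d+\frac{Ke(d+1)\ln K}{\gamma}+\gamma\left(\frac{\alpha(G_{\le d})}{2(1-e^{-1})(d+1)N}+\frac{3}{Ke}\right)T.$$
   Context: Setting. $A=\{1,\dots,K\}$ is the action set; an adversary fixes in advance loss vectors $\boldsymbol\ell_t=(\ell_t(1),\dots,\ell_t(K))\in[0,1]^K$, $t\ge1$. For $v\in V$ and $s\ge0$, $N_{\le s}(v)$ is the set of nodes at shortest-path distance at most $s$ from $v$ in $G$ (so $v\in N_{\le s}(v)$). $G_{\le d}$ is the graph on $V$ with an edge between distinct $u,v$ iff their shortest-path distance in $G$ is at most $d$ ($G_{\le 0}$ has no edges), and $\alpha(G_{\le d})$ is its independence number (maximum size of a set of pairwise nonadjacent vertices). Exp3-Coop. Each agent $v\in V$ keeps weights $w_t(i,v)$, with $w_1(i,v)=1$. At round $t=1,2,\dots$: each agent $v$ computes $W_t(v)=\sum_{j\in A}w_t(j,v)$, $p_t(i,v)=w_t(i,v)/W_t(v)$, and draws $I_t(v)\in A$ from $\boldsymbol p_t(v)=(p_t(1,v),\dots,p_t(K,v))$, the draws of different agents being independent conditionally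 on the past; agent $v$ incurs loss $\ell_t(I_t(v))$. Then each agent updates $w_{t+1}(i,v)=p_t(i,v)\exp(-\eta\,\widehat\ell_t(i,v))$, where $$\widehat\ell_t(i,v)=\begin{cases}\dfrac{\ell_{t-d}(i)}{q_{d,t-d}(i,v)}B_{d,t-d}(i,v)&t>d,\\ 0&\text{otherwise},\end{cases}$$ $B_{d,s}(i,v)=\mathbb{1}\{\exists v'\in N_{\le d}(v): I_s(v')=i\}$ and $q_{d,s}(i,v)=1-\prod_{v'\in N_{\le d}(v)}(1-p_s(i,v'))$. (Operationally, this information reaches $v$ through messages forwarded along $G$ at one hop per round.) Average welfare regret: $$R_T^{\mathrm{coop}}=\frac1N\sum_{v\in V}\mathbb E\Bigl[\sum_{t=1}^T\ell_t(I_t(v))\Bigr]-\min_{i\in A}\sum_{t=1}^T\ell_t(i),$$ the expectation being over the agents' internal randomization. *)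

theory Defs
  imports Complex_Main "HOL-Library.FuncSet"
begin

text \<open>Graph G on V = {1..N} given by a symmetric irreflexive edge relation E.
  walk_le E s u v: there is a walk of length at most s from u to v,
  i.e. the shortest-path distance from u to v is at most s.\<close>

fun walk_le :: "(nat \<Rightarrow> nat \<Rightarrow> bool) \<Rightarrow> nat \<Rightarrow> nat \<Rightarrow> nat \<Rightarrow> bool" where
  "walk_le E 0 u v = (u = v)"
| "walk_le E (Suc k) u v = (walk_le E k u v \<or> (\<exists>w. walk_le E k u w \<and> E w v))"

definition connected_graph :: "(nat \<Rightarrow> nat \<Rightarrow> bool) \<Rightarrow> nat \<Rightarrow> bool" where
  "connected_graph E N = (\<forall>u\<in>{1..N}. \<forall>v\<in>{1..N}. \<exists>k. walk_le E k u v)"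

definition nbhd :: "(nat \<Rightarrow> nat \<Rightarrow> bool) \<Rightarrow> nat \<Rightarrow> nat \<Rightarrow> nat \<Rightarrow> nat set" where
  "nbhd E N s v = {u \<in> {1..N}. walk_le E s v u}"

definition indep_pow :: "(nat \<Rightarrow> nat \<Rightarrow> bool) \<Rightarrow> nat \<Rightarrow> nat \<Rightarrow> nat set \<Rightarrow> bool" where
  "indep_pow E N d S = (S \<subseteq> {1..N} \<and> (\<forall>u\<in>S. \<forall>w\<in>S. u \<noteq> w \<longrightarrow> \<not> walk_le E d u w))"

definition alpha_pow :: "(nat \<Rightarrow> nat \<Rightarrow> bool) \<Rightarrow> nat \<Rightarrow> nat \<Rightarrow> nat" where
  "alpha_pow E N d = Max (card ` {S. indep_pow E N d S})"

text \<open>A realised history h maps (s, v) to the action I_s(v).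
  coop_p E N K d \<eta> L h t i v = p_t(i,v) along history h (rounds t \<ge> 1; it depends only
  on h at rounds < t). Round 0 is a dummy.\<close>

fun coop_p :: "(nat \<Rightarrow> nat \<Rightarrow> bool) \<Rightarrow> nat \<Rightarrow> nat \<Rightarrow> nat \<Rightarrow> real \<Rightarrow> (nat \<Rightarrow> nat \<Rightarrow> real)
    \<Rightarrow> (nat \<times> nat \<Rightarrow> nat) \<Rightarrow> nat \<Rightarrow> nat \<Rightarrow> nat \<Rightarrow> real" where
  "coop_p E N K d \<eta> L h 0 = (\<lambda>i v. 1 / real K)"
| "coop_p E N K d \<eta> L h (Suc t) =
    (let pt = coop_p E N K d \<eta> L h t;
         pd = coop_p E N K d \<eta> L h (t - d);
         lhat = (\<lambda>i v. if d < t then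
                   L (t - d) i / (1 - (\<Prod>v'\<in>nbhd E N d v. (1 - pd i v')))
                   * (if \<exists>v'\<in>nbhd E N d v. h (t - d, v') = i then 1 else 0)
                 else 0)
     in if t = 0 then (\<lambda>i v. 1 / real K)
        else (\<lambda>i v. pt i v * exp (- \<eta> * lhat i v)
                    / (\<Sum>j\<in>{1..K}. pt j v * exp (- \<eta> * lhat j v))))"

text \<open>Probability of a full history of rounds 1..T (independent draws given the past).\<close>
definition coop_prob :: "(nat \<Rightarrow> nat \<Rightarrow> bool) \<Rightarrow> nat \<Rightarrow> nat \<Rightarrow> nat \<Rightarrow> real \<Rightarrow> (nat \<Rightarrow> nat \<Rightarrow> real)
    \<Rightarrow> nat \<Rightarrow> (nat \<times> nat \<Rightarrow> nat) \<Rightarrow> real" where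
  "coop_prob E N K d \<eta> L T h =
     (\<Prod>s\<in>{1..T}. \<Prod>v\<in>{1..N}. coop_p E N K d \<eta> L h s (h (s, v)) v)"

definition histories :: "nat \<Rightarrow> nat \<Rightarrow> nat \<Rightarrow> (nat \<times> nat \<Rightarrow> nat) set" where
  "histories N K T = ({1..T} \<times> {1..N}) \<rightarrow>\<^sub>E {1..K}"

definition coop_exp_loss :: "(nat \<Rightarrow> nat \<Rightarrow> bool) \<Rightarrow> nat \<Rightarrow> nat \<Rightarrow> nat \<Rightarrow> real \<Rightarrow> (nat \<Rightarrow> nat \<Rightarrow> real)
    \<Rightarrow> nat \<Rightarrow> nat \<Rightarrow> real" where
  "coop_exp_loss E N K d \<eta> L T v =
     (\<Sum>h\<in>histories N K T. coop_prob E N K d \<eta> L T h * (\<Sum>t=1..T. L t (h (t, v))))"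

definition coop_regret :: "(nat \<Rightarrow> nat \<Rightarrow> bool) \<Rightarrow> nat \<Rightarrow> nat \<Rightarrow> nat \<Rightarrow> real \<Rightarrow> (nat \<Rightarrow> nat \<Rightarrow> real)
    \<Rightarrow> nat \<Rightarrow> real" where
  "coop_regret E N K d \<eta> L T =
     (\<Sum>v\<in>{1..N}. coop_exp_loss E N K d \<eta> L T v) / real N
     - Min ((\<lambda>i. \<Sum>t=1..T. L t i) ` {1..K})"

end

theory Submission
  imports Defs "HOL-Analysis.Convex"
begin

text \<open>Fix an agent \<open>v\<close>. Along every history its weights are exponential weights run on the
  delayed importance-weighted estimates \<open>lhat\<close>, so the potential argument for Hedge bounds the
  mixed estimated loss by \<open>ln K / \<eta>\<close>, plus the estimated loss of any fixed action, plus a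
  second-moment term. The estimate formed from round \<open>s\<close> is unbiased given the past, because
  \<open>q\<^sub>d\<^sub>,\<^sub>s(i,v)\<close> is exactly the probability that some agent within distance \<open>d\<close> of \<open>v\<close> plays \<open>i\<close>.
  The delay forces a comparison of the weights at rounds \<open>s\<close> and \<open>s + d\<close>; the choice of \<open>\<eta>\<close> keeps
  every weight from growing by more than a factor \<open>e\<close> within \<open>d\<close> rounds, which bounds the drift by
  \<open>\<eta> d e\<close> per round and the second moment by \<open>e \<Sum>\<^sub>i p\<^sub>s(i,v) / q\<^sub>s(i,v)\<close>. Finally, summed over
  the agents, \<open>\<Sum>\<^sub>v p(i,v) / q(i,v) \<le> (\<alpha> + \<Sum>\<^sub>v p(i,v)) / (1 - e\<^sup>-\<^sup>1)\<close> with \<open>\<alpha>\<close> the independence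
  number of the \<open>d\<close>-th power of the graph, by a greedy independent-set argument.\<close>

lemma exp_neg_le_quadratic:
  assumes "(y::real) \<ge> 0" shows "exp (- y) \<le> 1 - y + y\<^sup>2 / 2"
proof -
  let ?f = "\<lambda>x::real. 1 - x + x\<^sup>2 / 2 - exp (- x)"
  have "?f 0 \<le> ?f y"
  proof (rule DERIV_nonneg_imp_nondecreasing[OF assms])
    fix x :: real
    have "DERIV ?f x :> (- 1 + x + exp (- x))"
      by (auto intro!: derivative_eq_intros simp: power2_eq_square)
    moreover have "- 1 + x + exp (- x) \<ge> 0" using exp_ge_add_one_self[of "- x"] by simp
    ultimately show "\<exists>z. DERIV ?f x :> z \<and> z \<ge> 0" by blast
  qed
  then show ?thesis by simp
qed

lemma exp_neg_le_chord:
  assumes "0 \<le> x" "x \<le> (1::real)" shows "exp (- x) \<le> 1 - (1 - exp (-1)) * x"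
proof -
  have "exp ((1 - x) *\<^sub>R 0 + x *\<^sub>R (-1)) \<le> (1 - x) * exp 0 + x * exp (-1)"
    using assms by (intro convex_onD[OF exp_convex]) auto
  then show ?thesis by (simp add: algebra_simps)
qed

lemma one_plus_inverse_power_le_exp1:
  assumes "d \<ge> 1" shows "((real d + 1) / real d) ^ d \<le> exp 1"
proof -
  have "(real d + 1) / real d = 1 + 1 / real d" using assms by (simp add: field_simps)
  also have "\<dots> \<le> exp (1 / real d)" by (rule exp_ge_add_one_self)
  finally have "((real d + 1) / real d) ^ d \<le> exp (1 / real d) ^ d" by (intro power_mono) auto
  also have "\<dots> = exp 1" using assms by (simp add: exp_of_nat_mult[symmetric])
  finally show ?thesis .
qed

lemma geometric_growth_le:
  fixes f :: "nat \<Rightarrow> real"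
  assumes "\<And>r. u \<le> r \<Longrightarrow> r < u + m \<Longrightarrow> f (Suc r) \<le> \<rho> * f r" and "\<rho> \<ge> 0"
  shows "f (u + m) \<le> \<rho> ^ m * f u"
  using assms(1)
proof (induction m)
  case 0 then show ?case by simp
next
  case (Suc m)
  have "f (u + Suc m) \<le> \<rho> * f (u + m)" using Suc.prems[of "u + m"] by simp
  also have "\<dots> \<le> \<rho> * (\<rho> ^ m * f u)" using Suc assms(2) by (intro mult_left_mono) auto
  finally show ?case by (simp add: mult_ac)
qed

lemma sum_shift_vanishing:
  fixes g :: "nat \<Rightarrow> real"
  assumes "\<And>t. t \<le> d \<Longrightarrow> g t = 0"
  shows "(\<Sum>t\<in>{1..n}. g t) = (\<Sum>s\<in>{1..n-d}. g (s + d))"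
proof -
  have "(\<Sum>s\<in>{1..n-d}. g (s + d)) = (\<Sum>t\<in>(\<lambda>s. s + d) ` {1..n-d}. g t)"
    by (subst sum.reindex) (auto simp: inj_on_def)
  also have "\<dots> = (\<Sum>t\<in>{1..n}. g t)"
  proof (rule sum.mono_neutral_left)
    show "\<forall>t\<in>{1..n} - (\<lambda>s. s + d) ` {1..n - d}. g t = 0"
    proof
      fix t assume t: "t \<in> {1..n} - (\<lambda>s. s + d) ` {1..n - d}"
      have "t \<le> d"
      proof (rule ccontr)
        assume "\<not> t \<le> d"
        then have "t - d \<in> {1..n - d}" "t = (t - d) + d" using t by auto
        then show False using t by blast
      qed
      then show "g t = 0" by (rule assms)
    qed
  qed auto
  finally show ?thesis by simp
qed

section \<open>Weighted independent sets\<close>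

lemma walk_le_refl: "walk_le E k u u"
  by (induction k) auto

lemma walk_le_prepend: "walk_le E k u v \<Longrightarrow> E x u \<Longrightarrow> walk_le E (Suc k) x v"
proof (induction k arbitrary: v)
  case 0 then show ?case by auto
next
  case (Suc k)
  from Suc.prems(1) consider "walk_le E k u v" | w where "walk_le E k u w" "E w v" by auto
  then show ?case
  proof cases
    case 1 then show ?thesis using Suc by simp
  next
    case 2
    then have "walk_le E (Suc k) x w" using Suc by blast
    then show ?thesis using 2 by auto
  qed
qed

lemma walk_le_sym:
  assumes "\<And>u v. E u v \<Longrightarrow> E v u" shows "walk_le E k u v \<Longrightarrow> walk_le E k v u"
proof (induction k arbitrary: v)
  case 0 then show ?case by simp
next
  case (Suc k)
  from Suc.prems consider "walk_le E k u v" | w where "walk_le E k u w" "E w v" by auto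
  then show ?case
  proof cases
    case 1 then show ?thesis using Suc by simp
  next
    case 2
    then have "walk_le E k w u" using Suc by blast
    then show ?thesis using walk_le_prepend[of E k w u v] assms 2 by blast
  qed
qed

definition nbhd_weight :: "('a \<Rightarrow> 'a \<Rightarrow> bool) \<Rightarrow> ('a \<Rightarrow> real) \<Rightarrow> 'a set \<Rightarrow> 'a \<Rightarrow> real" where
  "nbhd_weight R w A v = (\<Sum>u\<in>{u\<in>A. R v u}. w u)"

lemma nbhd_weight_ge_self:
  assumes "finite A" "v \<in> A" "R v v" "\<And>u. u \<in> A \<Longrightarrow> w u \<ge> 0"
  shows "w v \<le> nbhd_weight R w A v"
  unfolding nbhd_weight_def using assms by (intro member_le_sum) auto

lemma nbhd_weight_pos:
  assumes "finite A" "v \<in> A" "R v v" "\<And>u. u \<in> A \<Longrightarrow> w u > 0"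
  shows "nbhd_weight R w A v > 0"
  using nbhd_weight_ge_self[of A v R w] assms by (meson less_imp_le less_le_trans)

lemma sum_ratio_min_nbhd_le_1:
  assumes A: "finite A" "\<And>v. v \<in> A \<Longrightarrow> R v v" "\<And>v. v \<in> A \<Longrightarrow> w v > 0"
    and v0: "v0 \<in> A" "\<And>v. v \<in> A \<Longrightarrow> nbhd_weight R w A v0 \<le> nbhd_weight R w A v"
  shows "(\<Sum>v\<in>{u\<in>A. R v0 u}. w v / nbhd_weight R w A v) \<le> 1"
proof -
  have "(\<Sum>v\<in>{u\<in>A. R v0 u}. w v / nbhd_weight R w A v)
      \<le> (\<Sum>v\<in>{u\<in>A. R v0 u}. w v / nbhd_weight R w A v0)"
    using A v0 nbhd_weight_pos[of A _ R w]
    by (intro sum_mono divide_left_mono) (auto intro: less_imp_le)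
  also have "\<dots> = nbhd_weight R w A v0 / nbhd_weight R w A v0"
    unfolding nbhd_weight_def by (rule sum_divide_distrib[symmetric])
  also have "\<dots> = 1" using nbhd_weight_pos[of A v0 R w] A v0 by simp
  finally show ?thesis .
qed

lemma sum_ratio_le_subset:
  assumes "finite A" "B \<subseteq> A" "\<And>v. v \<in> A \<Longrightarrow> R v v" "\<And>v. v \<in> A \<Longrightarrow> w v > 0"
  shows "(\<Sum>v\<in>B. w v / nbhd_weight R w A v) \<le> (\<Sum>v\<in>B. w v / nbhd_weight R w B v)"
proof (intro sum_mono divide_left_mono)
  fix v assume v: "v \<in> B"
  have fB: "finite B" using assms finite_subset by blast
  show "nbhd_weight R w B v \<le> nbhd_weight R w A v"
    unfolding nbhd_weight_def using assms by (intro sum_mono2) (auto intro: less_imp_le)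
  have "v \<in> A" using v assms(2) by blast
  then show "0 < nbhd_weight R w A v * nbhd_weight R w B v"
    using nbhd_weight_pos[of A v R w] nbhd_weight_pos[of B v R w] assms fB v
    by (intro mult_pos_pos) (auto simp: subset_iff)
  show "0 \<le> w v" using assms v by (auto intro: less_imp_le)
qed

text \<open>Greedy argument: repeatedly pick the vertex of least neighbourhood weight and delete its
  closed neighbourhood; the deleted vertices contribute at most 1 to the sum.\<close>

lemma independent_subset_ge_sum_ratio:
  assumes sym: "\<And>a b. R a b \<Longrightarrow> R b a" and refl: "\<And>a. a \<in> A \<Longrightarrow> R a a"
    and pos: "\<And>a. a \<in> A \<Longrightarrow> w a > 0" and A: "finite A"
  shows "\<exists>S\<subseteq>A. (\<forall>a\<in>S. \<forall>b\<in>S. a \<noteq> b \<longrightarrow> \<not> R a b)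
      \<and> (\<Sum>v\<in>A. w v / nbhd_weight R w A v) \<le> real (card S)"
  using A refl pos
proof (induction "card A" arbitrary: A rule: less_induct)
  case less
  show ?case
  proof (cases "A = {}")
    case True then show ?thesis by auto
  next
    case False
    define m where "m = Min (nbhd_weight R w A ` A)"
    have "m \<in> nbhd_weight R w A ` A"
      unfolding m_def using less.prems(1) False by (intro Min_in) auto
    then obtain v0 where v0: "v0 \<in> A" "nbhd_weight R w A v0 = m" by blast
    have v0_min: "nbhd_weight R w A v0 \<le> nbhd_weight R w A v" if "v \<in> A" for v
      unfolding v0(2) m_def using less.prems(1) that by simp
    define D where "D = {u\<in>A. R v0 u}"
    define A' where "A' = A - D"
    have "v0 \<in> D" using v0 less.prems unfolding D_def by auto
    then have "card A' < card A"
      unfolding A'_def using less.prems(1) v0(1) by (intro psubset_card_mono) auto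
    then obtain S' where S': "S' \<subseteq> A'" "\<forall>a\<in>S'. \<forall>b\<in>S'. a \<noteq> b \<longrightarrow> \<not> R a b"
      "(\<Sum>v\<in>A'. w v / nbhd_weight R w A' v) \<le> real (card S')"
      using less.hyps[of A'] less.prems unfolding A'_def by auto
    have far: "\<not> R v0 b" "\<not> R b v0" if "b \<in> S'" for b
      using that S'(1) sym unfolding A'_def D_def by auto
    have split: "(\<Sum>v\<in>A. w v / nbhd_weight R w A v)
        = (\<Sum>v\<in>D. w v / nbhd_weight R w A v) + (\<Sum>v\<in>A'. w v / nbhd_weight R w A v)"
      unfolding A'_def using less.prems(1) by (subst sum.subset_diff[of D]) (auto simp: D_def)
    have "(\<Sum>v\<in>D. w v / nbhd_weight R w A v) \<le> 1"
      unfolding D_def by (rule sum_ratio_min_nbhd_le_1[OF less.prems v0(1) v0_min])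
    moreover have "(\<Sum>v\<in>A'. w v / nbhd_weight R w A v) \<le> (\<Sum>v\<in>A'. w v / nbhd_weight R w A' v)"
      unfolding A'_def by (rule sum_ratio_le_subset[OF less.prems(1) _ less.prems(2,3)]) auto
    moreover have "v0 \<notin> S'" using S'(1) \<open>v0 \<in> D\<close> unfolding A'_def by blast
    then have "real (card (insert v0 S')) = 1 + real (card S')"
      using finite_subset[OF S'(1)] less.prems(1) unfolding A'_def by simp
    ultimately have "(\<Sum>v\<in>A. w v / nbhd_weight R w A v) \<le> real (card (insert v0 S'))"
      using split S'(3) by linarith
    then show ?thesis
      using S' far v0(1) unfolding A'_def by (intro exI[of _ "insert v0 S'"]) auto
  qed
qed

lemma card_le_alpha_pow:
  assumes "indep_pow E N d S" shows "card S \<le> alpha_pow E N d"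
proof -
  have "finite {S. indep_pow E N d S}"
    by (rule finite_subset[of _ "Pow {1..N}"]) (auto simp: indep_pow_def)
  then show ?thesis
    unfolding alpha_pow_def using assms by (intro Max_ge finite_imageI imageI) simp_all
qed

lemma sum_div_nbhd_weight_le_alpha_pow:
  assumes sym: "\<And>u v. E u v \<Longrightarrow> E v u" and pos: "\<And>v. v \<in> {1..N} \<Longrightarrow> w v > 0"
  shows "(\<Sum>v\<in>{1..N}. w v / (\<Sum>u\<in>nbhd E N d v. w u)) \<le> real (alpha_pow E N d)"
proof -
  obtain S where S: "S \<subseteq> {1..N}" "\<forall>a\<in>S. \<forall>b\<in>S. a \<noteq> b \<longrightarrow> \<not> walk_le E d a b"
    "(\<Sum>v\<in>{1..N}. w v / nbhd_weight (walk_le E d) w {1..N} v) \<le> real (card S)"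
    using independent_subset_ge_sum_ratio[of "walk_le E d" "{1..N}" w,
        OF walk_le_sym[OF sym] walk_le_refl pos finite_atLeastAtMost]
    by blast
  then have "indep_pow E N d S" unfolding indep_pow_def by blast
  then show ?thesis
    using S(3) card_le_alpha_pow[of E N d S] unfolding nbhd_weight_def nbhd_def by simp
qed

section \<open>The weights of Exp3-Coop along a history\<close>

type_synonym history = "nat \<times> nat \<Rightarrow> nat"

locale exp3_coop =
  fixes E :: "nat \<Rightarrow> nat \<Rightarrow> bool" and N K d :: nat and \<eta> :: real and L :: "nat \<Rightarrow> nat \<Rightarrow> real"
  assumes K_ge_2: "K \<ge> 2" and eta_pos: "\<eta> > 0"
    and eta_small: "\<eta> * real K * exp 1 * (real d + 1) \<le> 1"
    and loss_bounded: "\<And>t i. i \<in> {1..K} \<Longrightarrow> 0 \<le> L t i \<and> L t i \<le> 1"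
    and E_sym: "\<And>u v. E u v \<Longrightarrow> E v u"
begin

text \<open>Paper notation along a history \<open>h\<close>: \<open>P h t i v = p\<^sub>t(i,v)\<close>, \<open>q h s i v = q\<^sub>d\<^sub>,\<^sub>s(i,v)\<close>,
  \<open>obs h s i v = B\<^sub>d\<^sub>,\<^sub>s(i,v)\<close>, \<open>lhat h t i v\<close> is the estimate used in the update after round \<open>t\<close>,
  and \<open>Z h t v = W\<^sub>t\<^sub>+\<^sub>1(v)\<close> is the normaliser of that update.\<close>

definition P :: "history \<Rightarrow> nat \<Rightarrow> nat \<Rightarrow> nat \<Rightarrow> real" where
  "P h t i v = coop_p E N K d \<eta> L h t i v"

definition q :: "history \<Rightarrow> nat \<Rightarrow> nat \<Rightarrow> nat \<Rightarrow> real" where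
  "q h s i v = 1 - (\<Prod>v'\<in>nbhd E N d v. (1 - P h s i v'))"

definition obs :: "history \<Rightarrow> nat \<Rightarrow> nat \<Rightarrow> nat \<Rightarrow> real" where
  "obs h s i v = (if \<exists>v'\<in>nbhd E N d v. h (s, v') = i then 1 else 0)"

definition lhat :: "history \<Rightarrow> nat \<Rightarrow> nat \<Rightarrow> nat \<Rightarrow> real" where
  "lhat h t i v = (if d < t then L (t - d) i / q h (t - d) i v * obs h (t - d) i v else 0)"

definition Z :: "history \<Rightarrow> nat \<Rightarrow> nat \<Rightarrow> real" where
  "Z h t v = (\<Sum>j\<in>{1..K}. P h t j v * exp (- \<eta> * lhat h t j v))"

lemma P_0: "P h 0 i v = 1 / real K" by (simp add: P_def)

lemma P_Suc:
  "P h (Suc t) i v = (if t = 0 then 1 / real K else P h t i v * exp (- \<eta> * lhat h t i v) / Z h t v)"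
  unfolding P_def Z_def lhat_def q_def obs_def by (simp add: Let_def)

lemma K_pos: "real K > 0" using K_ge_2 by simp

lemma P_pos_sum: "(\<forall>i\<in>{1..K}. P h t i v > 0) \<and> (\<Sum>j\<in>{1..K}. P h t j v) = 1"
proof (induction t)
  case 0
  then show ?case using K_pos by (simp add: P_0)
next
  case (Suc t)
  show ?case
  proof (cases "t = 0")
    case True
    then show ?thesis using K_pos by (simp add: P_Suc)
  next
    case False
    have Zp: "Z h t v > 0" unfolding Z_def
      using Suc.IH K_ge_2 by (intro sum_pos) auto
    have "(\<Sum>j\<in>{1..K}. P h (Suc t) j v)
        = (\<Sum>j\<in>{1..K}. P h t j v * exp (- \<eta> * lhat h t j v)) / Z h t v"
      using False by (simp add: P_Suc sum_divide_distrib)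
    also have "\<dots> = 1" using Zp by (simp add: Z_def)
    finally show ?thesis using False Suc.IH Zp by (simp add: P_Suc)
  qed
qed

lemma P_pos: "i \<in> {1..K} \<Longrightarrow> P h t i v > 0" using P_pos_sum by blast

lemma P_sum: "(\<Sum>j\<in>{1..K}. P h t j v) = 1" using P_pos_sum by blast

lemma P_nonneg[simp]: "i \<in> {1..K} \<Longrightarrow> 0 \<le> P h t i v" using P_pos less_imp_le by blast

text \<open>The simplifier normalises \<open>{1..K}\<close> to \<open>{Suc 0..K}\<close>, so \<open>P_sum\<close> is declared in that form.\<close>

lemma P_sum_Suc0 [simp]: "(\<Sum>j = Suc 0..K. P h t j v) = 1" using P_sum by simp

lemma P_le_1: assumes "i \<in> {1..K}" shows "P h t i v \<le> 1"
proof -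
  have "P h t i v \<le> (\<Sum>j\<in>{1..K}. P h t j v)"
    using assms P_pos by (intro member_le_sum) (auto intro: less_imp_le)
  then show ?thesis using P_sum by simp
qed

lemma prod_one_minus_P_bounds:
  assumes "i \<in> {1..K}"
  shows "0 \<le> (\<Prod>v'\<in>S. (1 - P h s i v'))" "(\<Prod>v'\<in>S. (1 - P h s i v')) \<le> 1"
  using P_le_1[OF assms] P_pos[OF assms]
  by (auto intro!: prod_nonneg prod_le_1 simp: less_imp_le)

lemma q_nonneg: "i \<in> {1..K} \<Longrightarrow> q h s i v \<ge> 0"
  using prod_one_minus_P_bounds unfolding q_def by simp

lemma lhat_nonneg: "i \<in> {1..K} \<Longrightarrow> lhat h t i v \<ge> 0"
  unfolding lhat_def obs_def using q_nonneg loss_bounded by auto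

lemma Z_pos: "Z h t v > 0"
  unfolding Z_def using K_ge_2 P_pos by (intro sum_pos) auto

lemma P_cong_past: "(\<And>x. fst x < t \<Longrightarrow> h x = h' x) \<Longrightarrow> P h t = P h' t"
proof (induction t arbitrary: rule: less_induct)
  case (less t)
  show ?case
  proof (cases t)
    case 0 then show ?thesis by (simp add: P_def fun_eq_iff)
  next
    case (Suc t0)
    have IH: "P h t0 = P h' t0" "P h (t0 - d) = P h' (t0 - d)" using less Suc by auto
    have "h (t0 - d, v') = h' (t0 - d, v')" for v' using less Suc by auto
    then have "P h (Suc t0) i v = P h' (Suc t0) i v" for i v
      unfolding P_Suc lhat_def Z_def q_def obs_def IH by simp
    then show ?thesis using Suc by (simp add: fun_eq_iff)
  qed
qed

section \<open>Expectation over histories\<close>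

definition hist :: "nat \<Rightarrow> history set" where
  "hist n = histories N K n"

definition hist_prob :: "nat \<Rightarrow> history \<Rightarrow> real" where
  "hist_prob n h = coop_prob E N K d \<eta> L n h"

definition expect :: "nat \<Rightarrow> (history \<Rightarrow> real) \<Rightarrow> real" where
  "expect n f = (\<Sum>h\<in>hist n. hist_prob n h * f h)"

definition profiles :: "(nat \<Rightarrow> nat) set" where
  "profiles = {1..N} \<rightarrow>\<^sub>E {1..K}"

definition profile_prob :: "nat \<Rightarrow> history \<Rightarrow> (nat \<Rightarrow> nat) \<Rightarrow> real" where
  "profile_prob s h a = (\<Prod>v\<in>{1..N}. P h s (a v) v)"

definition extend :: "nat \<Rightarrow> history \<Rightarrow> (nat \<Rightarrow> nat) \<Rightarrow> history" where
  "extend s h a = (\<lambda>x. if fst x = s then a (snd x) else h x)"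

lemma hist_arb: "h \<in> hist n \<Longrightarrow> x \<notin> {1..n} \<times> {1..N} \<Longrightarrow> h x = undefined"
  unfolding hist_def histories_def by (rule PiE_arb)

lemma sum_profiles_prod:
  "(\<Sum>a\<in>profiles. \<Prod>v\<in>{1..N}. (f :: nat \<Rightarrow> nat \<Rightarrow> real) v (a v)) = (\<Prod>v\<in>{1..N}. \<Sum>y\<in>{1..K}. f v y)"
  unfolding profiles_def using prod_sum_PiE[of "{1..N}" "\<lambda>_. {1..K}" f] by simp

lemma profile_prob_sum: "(\<Sum>a\<in>profiles. profile_prob s h a) = 1"
  unfolding profile_prob_def using sum_profiles_prod[of "\<lambda>v y. P h s y v"] P_sum by simp

lemma hist_prob_nonneg: "h \<in> hist n \<Longrightarrow> hist_prob n h \<ge> 0"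
  unfolding hist_prob_def coop_prob_def P_def[symmetric]
proof (intro prod_nonneg ballI)
  fix s v assume "h \<in> hist n" "s \<in> {1..n}" "v \<in> {1..N}"
  then have "h (s, v) \<in> {1..K}" unfolding hist_def histories_def by auto
  then show "0 \<le> P h s (h (s, v)) v" using P_pos less_imp_le by blast
qed

lemma hist_prob_Suc:
  assumes h: "h \<in> hist n" and a: "a \<in> profiles"
  shows "hist_prob (Suc n) (extend (Suc n) h a) = hist_prob n h * profile_prob (Suc n) h a"
proof -
  let ?g = "extend (Suc n) h a"
  have dg: "\<And>s. s \<le> Suc n \<Longrightarrow> P ?g s = P h s"
    by (rule P_cong_past) (auto simp: extend_def)
  have "hist_prob (Suc n) ?g = (\<Prod>s\<in>insert (Suc n) {1..n}. \<Prod>v\<in>{1..N}. P ?g s (?g (s, v)) v)"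
    unfolding hist_prob_def coop_prob_def P_def[symmetric]
    by (simp add: atLeastAtMostSuc_conv)
  also have "\<dots> = (\<Prod>v\<in>{1..N}. P ?g (Suc n) (?g (Suc n, v)) v)
      * (\<Prod>s\<in>{1..n}. \<Prod>v\<in>{1..N}. P ?g s (?g (s, v)) v)"
    by simp
  also have "(\<Prod>v\<in>{1..N}. P ?g (Suc n) (?g (Suc n, v)) v) = profile_prob (Suc n) h a"
    unfolding profile_prob_def dg[OF order_refl] by (simp add: extend_def)
  also have "(\<Prod>s\<in>{1..n}. \<Prod>v\<in>{1..N}. P ?g s (?g (s, v)) v) = hist_prob n h"
    unfolding hist_prob_def coop_prob_def P_def[symmetric]
  proof (intro prod.cong refl)
    fix s v assume "s \<in> {1..n}" "v \<in> {1..N}"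
    then show "P ?g s (?g (s, v)) v = P h s (h (s, v)) v" using dg[of s] by (simp add: extend_def)
  qed
  finally show ?thesis by simp
qed

lemma extend_in: "h \<in> hist n \<Longrightarrow> a \<in> profiles \<Longrightarrow> extend (Suc n) h a \<in> hist (Suc n)"
  unfolding hist_def histories_def profiles_def extend_def
  by (auto simp: PiE_iff extensional_def)

lemma hist_mem: "g \<in> hist n \<Longrightarrow> x \<in> {1..n} \<times> {1..N} \<Longrightarrow> g x \<in> {1..K}"
  unfolding hist_def histories_def by auto

lemma hist_Suc: "hist (Suc n) = (\<lambda>(h, a). extend (Suc n) h a) ` (hist n \<times> profiles)"
proof (intro equalityI subsetI)
  fix g assume g: "g \<in> hist (Suc n)"
  define h where "h = restrict g ({1..n} \<times> {1..N})"
  define a where "a = (\<lambda>v\<in>{1..N}. g (Suc n, v))"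
  have "h \<in> hist n" "a \<in> profiles"
    using hist_mem[OF g] unfolding h_def a_def hist_def histories_def profiles_def by auto
  moreover have "g x = extend (Suc n) h a x" for x
    using hist_arb[OF g, of x] by (cases x) (auto simp: extend_def h_def a_def)
  ultimately show "g \<in> (\<lambda>(h, a). extend (Suc n) h a) ` (hist n \<times> profiles)" by force
qed (auto intro: extend_in)

lemma inj_extend: "inj_on (\<lambda>(h, a). extend (Suc n) h a) (hist n \<times> profiles)"
proof (rule inj_onI, clarify)
  fix h a h' a' assume h: "h \<in> hist n" "h' \<in> hist n"
    and eq: "extend (Suc n) h a = extend (Suc n) h' a'"
  have "a v = a' v" for v using fun_cong[OF eq, of "(Suc n, v)"] by (simp add: extend_def)
  moreover have "h x = h' x" for x
  proof (cases "fst x = Suc n")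
    case True
    then have "x \<notin> {1..n} \<times> {1..N}" by auto
    then show ?thesis using hist_arb h by metis
  next
    case False
    then show ?thesis using fun_cong[OF eq, of x] by (simp add: extend_def)
  qed
  ultimately show "h = h' \<and> a = a'" by auto
qed

lemma expect_Suc:
  "expect (Suc n) g = expect n (\<lambda>h. \<Sum>a\<in>profiles. profile_prob (Suc n) h a * g (extend (Suc n) h a))"
proof -
  have "expect (Suc n) g = (\<Sum>x\<in>hist n \<times> profiles.
      hist_prob (Suc n) (extend (Suc n) (fst x) (snd x)) * g (extend (Suc n) (fst x) (snd x)))"
    unfolding expect_def hist_Suc sum.reindex[OF inj_extend] by (simp add: case_prod_beta)
  also have "\<dots> = (\<Sum>h\<in>hist n. \<Sum>a\<in>profiles.
      hist_prob (Suc n) (extend (Suc n) h a) * g (extend (Suc n) h a))"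
    by (simp add: sum.cartesian_product')
  also have "\<dots> = (\<Sum>h\<in>hist n. \<Sum>a\<in>profiles.
      hist_prob n h * (profile_prob (Suc n) h a * g (extend (Suc n) h a)))"
    by (intro sum.cong refl) (simp add: hist_prob_Suc)
  also have "\<dots> = expect n (\<lambda>h. \<Sum>a\<in>profiles. profile_prob (Suc n) h a * g (extend (Suc n) h a))"
    unfolding expect_def by (simp add: sum_distrib_left)
  finally show ?thesis .
qed

definition depends_upto :: "nat \<Rightarrow> (history \<Rightarrow> real) \<Rightarrow> bool" where
  "depends_upto m f \<longleftrightarrow> (\<forall>h h'. (\<forall>x. fst x \<le> m \<longrightarrow> h x = h' x) \<longrightarrow> f h = f h')"

lemma depends_uptoD: "depends_upto m f \<Longrightarrow> (\<And>x. fst x \<le> m \<Longrightarrow> h x = h' x) \<Longrightarrow> f h = f h'"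
  unfolding depends_upto_def by blast

lemma depends_uptoI: "(\<And>h h'. (\<And>x. fst x \<le> m \<Longrightarrow> h x = h' x) \<Longrightarrow> f h = f h') \<Longrightarrow> depends_upto m f"
  unfolding depends_upto_def by blast

lemma depends_upto_const: "depends_upto m (\<lambda>_. c)" unfolding depends_upto_def by simp

lemma depends_upto_mult:
  assumes "depends_upto m f" "depends_upto m g"
  shows "depends_upto m (\<lambda>h. f h * g h)"
proof (rule depends_uptoI)
  fix h h' :: history assume "\<And>x. fst x \<le> m \<Longrightarrow> h x = h' x"
  then show "f h * g h = f h' * g h'"
    using depends_uptoD[OF assms(1)] depends_uptoD[OF assms(2)] by metis
qed

lemma depends_upto_comp: assumes "depends_upto m f" shows "depends_upto m (\<lambda>h. \<phi> (f h))"
proof (rule depends_uptoI)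
  fix h h' :: history assume "\<And>x. fst x \<le> m \<Longrightarrow> h x = h' x"
  then show "\<phi> (f h) = \<phi> (f h')" using depends_uptoD[OF assms(1)] by metis
qed

lemma depends_upto_sum:
  assumes "\<And>i. i \<in> I \<Longrightarrow> depends_upto m (f i)"
  shows "depends_upto m (\<lambda>h. \<Sum>i\<in>I. f i h)"
proof (rule depends_uptoI)
  fix h h' :: history assume a: "\<And>x. fst x \<le> m \<Longrightarrow> h x = h' x"
  show "(\<Sum>i\<in>I. f i h) = (\<Sum>i\<in>I. f i h')"
    by (rule sum.cong[OF refl], rule depends_uptoD[OF assms a]) auto
qed

lemma depends_upto_prod:
  assumes "\<And>i. i \<in> I \<Longrightarrow> depends_upto m (f i)"
  shows "depends_upto m (\<lambda>h. \<Prod>i\<in>I. f i h)"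
proof (rule depends_uptoI)
  fix h h' :: history assume a: "\<And>x. fst x \<le> m \<Longrightarrow> h x = h' x"
  show "(\<Prod>i\<in>I. f i h) = (\<Prod>i\<in>I. f i h')"
    by (rule prod.cong[OF refl], rule depends_uptoD[OF assms a]) auto
qed

lemma depends_upto_P: assumes "s \<le> Suc m" shows "depends_upto m (\<lambda>h. P h s i v)"
proof (rule depends_uptoI)
  fix h h' :: history assume "\<And>x. fst x \<le> m \<Longrightarrow> h x = h' x"
  then have "P h s = P h' s" using assms by (intro P_cong_past) auto
  then show "P h s i v = P h' s i v" by simp
qed

lemma depends_upto_profile_prob: "depends_upto m (\<lambda>h. profile_prob (Suc m) h a)"
  unfolding profile_prob_def by (intro depends_upto_prod depends_upto_P) simp

lemma expect_cong: "(\<And>h. h \<in> hist n \<Longrightarrow> f h = g h) \<Longrightarrow> expect n f = expect n g"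
  unfolding expect_def by (auto intro!: sum.cong)

lemma expect_mono: "(\<And>h. h \<in> hist n \<Longrightarrow> f h \<le> g h) \<Longrightarrow> expect n f \<le> expect n g"
  unfolding expect_def by (auto intro!: sum_mono mult_left_mono hist_prob_nonneg)

lemma expect_add: "expect n (\<lambda>h. f h + g h) = expect n f + expect n g"
  unfolding expect_def by (simp add: distrib_left sum.distrib)

lemma expect_diff: "expect n (\<lambda>h. f h - g h) = expect n f - expect n g"
  unfolding expect_def by (simp add: right_diff_distrib sum_subtractf)

lemma expect_cmult: "expect n (\<lambda>h. c * f h) = c * expect n f"
  unfolding expect_def by (simp add: sum_distrib_left mult.left_commute)

lemma expect_sum: "expect n (\<lambda>h. \<Sum>i\<in>I. f i h) = (\<Sum>i\<in>I. expect n (f i))"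
  unfolding expect_def sum_distrib_left by (rule sum.swap)

lemma expect_marginal: assumes "m \<le> n" "depends_upto m f" shows "expect n f = expect m f"
  using assms(1)
proof (induction n)
  case 0 then show ?case by simp
next
  case (Suc n)
  show ?case
  proof (cases "m = Suc n")
    case True then show ?thesis by simp
  next
    case False
    then have mn: "m \<le> n" using Suc by simp
    have "expect (Suc n) f
        = expect n (\<lambda>h. \<Sum>a\<in>profiles. profile_prob (Suc n) h a * f (extend (Suc n) h a))"
      by (rule expect_Suc)
    also have "\<dots> = expect n (\<lambda>h. (\<Sum>a\<in>profiles. profile_prob (Suc n) h a) * f h)"
      unfolding sum_distrib_right
    proof (intro expect_cong sum.cong refl arg_cong[where f="\<lambda>x. _ * x"])
      fix h a show "f (extend (Suc n) h a) = f h"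
        using mn by (intro depends_uptoD[OF assms(2)]) (auto simp: extend_def)
    qed
    also have "\<dots> = expect n f" by (simp add: profile_prob_sum)
    finally show ?thesis using Suc.IH mn by simp
  qed
qed

lemma hist0: "hist 0 = {\<lambda>_. undefined}"
  unfolding hist_def histories_def by simp

lemma expect_const: "expect n (\<lambda>_. c) = c"
proof -
  have "expect n (\<lambda>_. c) = expect 0 (\<lambda>_. c)"
    by (rule expect_marginal) (auto intro: depends_upto_const)
  also have "\<dots> = c" unfolding expect_def hist0 hist_prob_def coop_prob_def by simp
  finally show ?thesis .
qed

lemma expect_round:
  assumes s: "1 \<le> s" "s \<le> n" and G: "\<And>a. depends_upto (s - 1) (\<lambda>h. G h a)"
  shows "expect n (\<lambda>h. G h (\<lambda>v. h (s, v))) = expect n (\<lambda>h. \<Sum>a\<in>profiles. profile_prob s h a * G h a)"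
proof -
  obtain m where m: "s = Suc m" using s by (cases s) auto
  have G': "\<And>a. depends_upto m (\<lambda>h. G h a)" using G m by simp
  have d1: "depends_upto s (\<lambda>h. G h (\<lambda>v. h (s, v)))"
  proof (rule depends_uptoI)
    fix h h' :: history assume hh: "\<And>x. fst x \<le> s \<Longrightarrow> h x = h' x"
    have "(\<lambda>v. h (s, v)) = (\<lambda>v. h' (s, v))" using hh by auto
    moreover have "G h a = G h' a" for a using hh m by (intro depends_uptoD[OF G']) auto
    ultimately show "G h (\<lambda>v. h (s, v)) = G h' (\<lambda>v. h' (s, v))" by simp
  qed
  have d2: "depends_upto m (\<lambda>h. \<Sum>a\<in>profiles. profile_prob s h a * G h a)"
    using G' depends_upto_profile_prob m by (auto intro!: depends_upto_sum depends_upto_mult)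
  have "expect n (\<lambda>h. G h (\<lambda>v. h (s, v))) = expect s (\<lambda>h. G h (\<lambda>v. h (s, v)))"
    using s d1 by (intro expect_marginal) auto
  also have "\<dots> = expect m (\<lambda>h. \<Sum>a\<in>profiles.
      profile_prob s h a * G (extend s h a) (\<lambda>v. extend s h a (s, v)))"
    unfolding m by (rule expect_Suc)
  also have "\<dots> = expect m (\<lambda>h. \<Sum>a\<in>profiles. profile_prob s h a * G h a)"
  proof (intro expect_cong sum.cong refl arg_cong[where f="\<lambda>x. _ * x"])
    fix h a
    have "(\<lambda>v. extend s h a (s, v)) = a" by (simp add: extend_def)
    moreover have "G (extend s h a) a = G h a"
      using m by (intro depends_uptoD[OF G']) (auto simp: extend_def)
    ultimately show "G (extend s h a) (\<lambda>v. extend s h a (s, v)) = G h a" by simp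
  qed
  also have "\<dots> = expect n (\<lambda>h. \<Sum>a\<in>profiles. profile_prob s h a * G h a)"
    using s m d2 by (intro expect_marginal[symmetric]) auto
  finally show ?thesis .
qed

text \<open>The agents draw independently in each round, so expectations over a round factorise.\<close>

lemma sum_profiles_factor:
  "(\<Sum>a\<in>profiles. profile_prob s h a * (\<Prod>w\<in>{1..N}. g w (a w)))
    = (\<Prod>w\<in>{1..N}. \<Sum>y\<in>{1..K}. P h s y w * g w y)"
  unfolding profile_prob_def prod.distrib[symmetric] by (rule sum_profiles_prod)

lemma sum_profiles_single:
  assumes v: "v \<in> {1..N}"
  shows "(\<Sum>a\<in>profiles. profile_prob s h a * \<phi> (a v)) = (\<Sum>y\<in>{1..K}. P h s y v * \<phi> y)"
proof -
  have "(\<Sum>a\<in>profiles. profile_prob s h a * \<phi> (a v))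
      = (\<Sum>a\<in>profiles. profile_prob s h a * (\<Prod>w\<in>{1..N}. if w = v then \<phi> (a w) else 1))"
    using v by (simp add: prod.delta)
  also have "\<dots> = (\<Prod>w\<in>{1..N}. if w = v then \<Sum>y\<in>{1..K}. P h s y v * \<phi> y else 1)"
    unfolding sum_profiles_factor[where g = "\<lambda>w y. if w = v then \<phi> y else 1"]
    by (intro prod.cong) (simp_all add: P_sum)
  also have "\<dots> = (\<Sum>y\<in>{1..K}. P h s y v * \<phi> y)" using v by (simp add: prod.delta)
  finally show ?thesis .
qed

lemma sum_profiles_miss:
  assumes S: "S \<subseteq> {1..N}" and i: "i \<in> {1..K}"
  shows "(\<Sum>a\<in>profiles. profile_prob s h a * (if \<exists>w\<in>S. a w = i then 0 else 1))
    = (\<Prod>w\<in>S. (1 - P h s i w))"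
proof -
  have miss: "(if \<exists>w\<in>S. a w = i then 0 else 1)
      = (\<Prod>w\<in>{1..N}. if w \<in> S \<and> a w = i then 0 else 1::real)"
    for a using S by (cases "\<exists>w\<in>S. a w = i") (auto intro: prod_zero simp: prod.neutral)
  have row: "(\<Sum>y\<in>{1..K}. P h s y w * (if w \<in> S \<and> y = i then 0 else 1))
      = (if w \<in> S then 1 - P h s i w else 1)" for w
  proof (cases "w \<in> S")
    case True
    have "(\<Sum>y\<in>{1..K}. P h s y w * (if w \<in> S \<and> y = i then 0 else 1))
        = (\<Sum>y\<in>{1..K}. P h s y w - (if y = i then P h s y w else 0))"
      using True by (intro sum.cong) auto
    then show ?thesis using True i by (simp add: sum_subtractf P_sum)
  qed (simp add: P_sum)
  have "(\<Sum>a\<in>profiles. profile_prob s h a * (if \<exists>w\<in>S. a w = i then 0 else 1))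
      = (\<Sum>a\<in>profiles. profile_prob s h a * (\<Prod>w\<in>{1..N}. if w \<in> S \<and> a w = i then 0 else 1))"
    by (simp only: miss)
  also have "\<dots> = (\<Prod>w\<in>{1..N}. \<Sum>y\<in>{1..K}. P h s y w * (if w \<in> S \<and> y = i then 0 else 1))"
    by (rule sum_profiles_factor)
  also have "\<dots> = (\<Prod>w\<in>{1..N}. if w \<in> S then 1 - P h s i w else 1)"
    by (simp only: row)
  also have "\<dots> = (\<Prod>w\<in>S. (1 - P h s i w))"
    using S by (simp add: prod.If_cases Int_absorb1)
  finally show ?thesis .
qed

lemma sum_profiles_hit:
  assumes S: "S \<subseteq> {1..N}" and i: "i \<in> {1..K}"
  shows "(\<Sum>a\<in>profiles. profile_prob s h a * (if \<exists>w\<in>S. a w = i then 1 else 0))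
    = 1 - (\<Prod>w\<in>S. (1 - P h s i w))"
proof -
  have "(\<Sum>a\<in>profiles. profile_prob s h a * (if \<exists>w\<in>S. a w = i then 1 else 0))
      = (\<Sum>a\<in>profiles. profile_prob s h a)
        - (\<Sum>a\<in>profiles. profile_prob s h a * (if \<exists>w\<in>S. a w = i then 0 else 1))"
    by (subst sum_subtractf[symmetric]) (auto intro!: sum.cong)
  then show ?thesis using sum_profiles_miss[OF S i] profile_prob_sum by simp
qed

lemma nbhd_subset: "nbhd E N d v \<subseteq> {1..N}" unfolding nbhd_def by auto

lemma finite_nbhd: "finite (nbhd E N d v)" using nbhd_subset finite_subset by blast

lemma nbhd_refl: "v \<in> {1..N} \<Longrightarrow> v \<in> nbhd E N d v" unfolding nbhd_def by (simp add: walk_le_refl)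

lemma q_ge_P: assumes v: "v \<in> {1..N}" and i: "i \<in> {1..K}" shows "q h s i v \<ge> P h s i v"
proof -
  have "(\<Prod>v'\<in>nbhd E N d v. (1 - P h s i v'))
      = (1 - P h s i v) * (\<Prod>v'\<in>nbhd E N d v - {v}. (1 - P h s i v'))"
    using nbhd_refl[OF v] finite_nbhd by (simp add: prod.remove)
  also have "\<dots> \<le> (1 - P h s i v) * 1"
    using prod_one_minus_P_bounds[OF i] P_le_1[OF i] by (intro mult_left_mono) auto
  finally show ?thesis unfolding q_def by simp
qed

lemma q_pos: "v \<in> {1..N} \<Longrightarrow> i \<in> {1..K} \<Longrightarrow> q h s i v > 0"
  using q_ge_P P_pos by (meson less_le_trans)

lemma obs_bounds: "obs h s i v \<ge> 0" "obs h s i v \<le> 1" "obs h s i v * obs h s i v = obs h s i v"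
  unfolding obs_def by auto

lemma depends_upto_obs: assumes "s \<le> m" shows "depends_upto m (\<lambda>h. obs h s i v)"
proof (rule depends_uptoI)
  fix h h' :: history assume a: "\<And>x. fst x \<le> m \<Longrightarrow> h x = h' x"
  have "\<And>w. h (s, w) = h' (s, w)" using a assms by simp
  then show "obs h s i v = obs h' s i v" unfolding obs_def by simp
qed

lemma depends_upto_q: assumes "s \<le> Suc m" shows "depends_upto m (\<lambda>h. q h s i v)"
proof (rule depends_uptoI)
  fix h h' :: history assume a: "\<And>x. fst x \<le> m \<Longrightarrow> h x = h' x"
  have "P h s = P h' s" using assms a by (intro P_cong_past) auto
  then show "q h s i v = q h' s i v" unfolding q_def by simp
qed

lemma depends_upto_lhat: assumes "t - d \<le> m" shows "depends_upto m (\<lambda>h. lhat h t i v)"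
proof (rule depends_uptoI)
  fix h h' :: history assume a: "\<And>x. fst x \<le> m \<Longrightarrow> h x = h' x"
  have "q h (t - d) i v = q h' (t - d) i v"
    using assms by (intro depends_uptoD[OF depends_upto_q a]) auto
  moreover have "obs h (t - d) i v = obs h' (t - d) i v"
    using assms by (intro depends_uptoD[OF depends_upto_obs a]) auto
  ultimately show "lhat h t i v = lhat h' t i v" unfolding lhat_def by simp
qed

lemma expect_action_loss:
  assumes "1 \<le> t" "t \<le> n" "v \<in> {1..N}"
  shows "expect n (\<lambda>h. \<phi> (h (t, v))) = expect n (\<lambda>h. \<Sum>y\<in>{1..K}. P h t y v * \<phi> y)"
proof -
  have "expect n (\<lambda>h. \<phi> (h (t, v))) = expect n (\<lambda>h. \<Sum>a\<in>profiles. profile_prob t h a * \<phi> (a v))"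
    using expect_round[of t n "\<lambda>h a. \<phi> (a v)"] assms by (simp add: depends_upto_const)
  also have "\<dots> = expect n (\<lambda>h. \<Sum>y\<in>{1..K}. P h t y v * \<phi> y)"
    using assms(3) by (simp add: sum_profiles_single)
  finally show ?thesis .
qed

lemma expect_obs:
  assumes s: "1 \<le> s" "s \<le> n" and v: "v \<in> {1..N}" and i: "i \<in> {1..K}"
    and c: "depends_upto (s - 1) c"
  shows "expect n (\<lambda>h. c h * obs h s i v) = expect n (\<lambda>h. c h * q h s i v)"
proof -
  define hit :: "(nat \<Rightarrow> nat) \<Rightarrow> real" where
    "hit a = (if \<exists>w\<in>nbhd E N d v. a w = i then 1 else 0)" for a
  have "expect n (\<lambda>h. c h * obs h s i v)
      = expect n (\<lambda>h. \<Sum>a\<in>profiles. profile_prob s h a * (c h * hit a))"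
    using expect_round[OF s, of "\<lambda>h a. c h * hit a"] c
    unfolding obs_def hit_def by (simp add: depends_upto_mult depends_upto_const)
  also have "\<dots> = expect n (\<lambda>h. c h * q h s i v)"
  proof (rule expect_cong)
    fix h
    have "(\<Sum>a\<in>profiles. profile_prob s h a * (c h * hit a))
        = c h * (\<Sum>a\<in>profiles. profile_prob s h a * hit a)"
      by (simp add: sum_distrib_left mult_ac)
    then show "(\<Sum>a\<in>profiles. profile_prob s h a * (c h * hit a)) = c h * q h s i v"
      using sum_profiles_hit[OF nbhd_subset i] unfolding hit_def q_def by simp
  qed
  finally show ?thesis .
qed

section \<open>Stability of the weights\<close>

lemma lhat_zero: "t \<le> d \<Longrightarrow> lhat h t i v = 0" unfolding lhat_def by simp

lemma Z_le_1: "Z h t v \<le> 1"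
proof -
  have "Z h t v \<le> (\<Sum>j\<in>{1..K}. P h t j v)" unfolding Z_def
  proof (intro sum_mono)
    fix j assume j: "j \<in> {1..K}"
    have "exp (- \<eta> * lhat h t j v) \<le> 1" using lhat_nonneg[OF j] eta_pos by simp
    then show "P h t j v * exp (- \<eta> * lhat h t j v) \<le> P h t j v"
      using P_pos[OF j] by (simp add: mult_left_le)
  qed
  then show ?thesis using P_sum by simp
qed

lemma P_step_lower:
  assumes i: "i \<in> {1..K}"
  shows "P h (Suc t) i v \<ge> P h t i v * exp (- \<eta> * lhat h t i v)"
proof (cases "t = 0")
  case True then show ?thesis by (simp add: P_Suc P_0 lhat_def)
next
  case False
  have a: "P h t i v * exp (- \<eta> * lhat h t i v) \<ge> 0" using P_pos[OF i, of h t v] by simp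
  have "P h t i v * exp (- \<eta> * lhat h t i v) * Z h t v \<le> P h t i v * exp (- \<eta> * lhat h t i v)"
    using Z_le_1[of h t v] a by (simp add: mult_left_le)
  then have "P h t i v * exp (- \<eta> * lhat h t i v) \<le> P h t i v * exp (- \<eta> * lhat h t i v) / Z h t v"
    using Z_pos[of h t v] by (simp add: le_divide_eq)
  then show ?thesis using False by (simp add: P_Suc)
qed

lemma P_lower_exp: assumes i: "i \<in> {1..K}"
  shows "P h (s + m) i v \<ge> P h s i v * exp (- \<eta> * (\<Sum>r\<in>{s..<s+m}. lhat h r i v))"
proof (induction m)
  case 0 then show ?case by simp
next
  case (Suc m)
  have "P h s i v * exp (- \<eta> * (\<Sum>r\<in>{s..<s + Suc m}. lhat h r i v))
      = (P h s i v * exp (- \<eta> * (\<Sum>r\<in>{s..<s+m}. lhat h r i v))) * exp (- \<eta> * lhat h (s + m) i v)"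
    by (simp add: distrib_left exp_add[symmetric] algebra_simps)
  also have "\<dots> \<le> P h (s + m) i v * exp (- \<eta> * lhat h (s + m) i v)"
    using Suc.IH by (intro mult_right_mono) auto
  also have "\<dots> \<le> P h (Suc (s + m)) i v" by (rule P_step_lower[OF i])
  finally show ?case by simp
qed

lemma P_lower: assumes i: "i \<in> {1..K}"
  shows "P h (s + m) i v \<ge> P h s i v * (1 - \<eta> * (\<Sum>r\<in>{s..<s+m}. lhat h r i v))"
proof -
  have "1 - \<eta> * (\<Sum>r\<in>{s..<s+m}. lhat h r i v) \<le> exp (- \<eta> * (\<Sum>r\<in>{s..<s+m}. lhat h r i v))"
    using exp_ge_add_one_self[of "- \<eta> * (\<Sum>r\<in>{s..<s+m}. lhat h r i v)"] by simp
  then have "P h s i v * (1 - \<eta> * (\<Sum>r\<in>{s..<s+m}. lhat h r i v))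
      \<le> P h s i v * exp (- \<eta> * (\<Sum>r\<in>{s..<s+m}. lhat h r i v))"
    using P_pos[OF i, of h s v] by (intro mult_left_mono) auto
  then show ?thesis using P_lower_exp[OF i, of h s v m] by linarith
qed

lemma lhat_le_inv: assumes v: "v \<in> {1..N}" and i: "i \<in> {1..K}" and t: "d < t"
  shows "lhat h t i v \<le> 1 / P h (t - d) i v"
proof -
  have qp: "q h (t - d) i v \<ge> P h (t - d) i v" "P h (t - d) i v > 0"
    using q_ge_P[OF v i] P_pos[OF i] by auto
  have "lhat h t i v = L (t - d) i * obs h (t - d) i v / q h (t - d) i v"
    using t by (simp add: lhat_def)
  also have "\<dots> \<le> 1 / q h (t - d) i v"
    using loss_bounded[OF i, of "t - d"] obs_bounds[of h "t - d" i v] qp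
    by (intro divide_right_mono) (auto intro: mult_le_one)
  also have "\<dots> \<le> 1 / P h (t - d) i v" using qp by (intro divide_left_mono) auto
  finally show ?thesis .
qed

lemma P_Suc_eq_before_feedback: "t \<le> d \<Longrightarrow> P h (Suc t) i v = P h t i v"
proof (cases "t = 0")
  case False
  assume "t \<le> d"
  then have "Z h t v = 1" by (simp add: Z_def lhat_zero P_sum)
  with \<open>t \<le> d\<close> False show ?thesis by (simp add: P_Suc lhat_zero)
qed (simp add: P_Suc P_0)

lemma Z_ge_one_minus_mixed_lhat: "Z h t v \<ge> 1 - \<eta> * (\<Sum>j\<in>{1..K}. P h t j v * lhat h t j v)"
proof -
  have "(\<Sum>j\<in>{1..K}. P h t j v * (1 - \<eta> * lhat h t j v)) \<le> Z h t v"
    unfolding Z_def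
    using exp_ge_add_one_self[of "- \<eta> * lhat h t j v" for j]
    by (intro sum_mono mult_left_mono) auto
  moreover have "(\<Sum>j\<in>{1..K}. P h t j v * (1 - \<eta> * lhat h t j v))
      = 1 - \<eta> * (\<Sum>j\<in>{1..K}. P h t j v * lhat h t j v)"
    by (simp add: algebra_simps sum_subtractf sum_distrib_left P_sum)
  ultimately show ?thesis by simp
qed

text \<open>If no weight has grown by more than a factor \<open>e\<close> over the last \<open>d\<close> rounds, each
  \<open>P h t j v * lhat h t j v\<close> is at most \<open>e\<close>, so the choice of \<open>\<eta>\<close> keeps the normaliser above
  \<open>d / (d + 1)\<close>.\<close>

lemma Z_ge_when_window_bounded:
  assumes v: "v \<in> {1..N}" and t: "d < t"
    and window: "\<And>j. j \<in> {1..K} \<Longrightarrow> P h t j v \<le> exp 1 * P h (t - d) j v"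
  shows "Z h t v \<ge> real d / (real d + 1)"
proof -
  have "P h t j v * lhat h t j v \<le> exp 1" if j: "j \<in> {1..K}" for j
  proof -
    have "P h t j v * lhat h t j v \<le> P h t j v * (1 / P h (t - d) j v)"
      using lhat_le_inv[OF v j t] P_nonneg[OF j] by (intro mult_left_mono) auto
    also have "\<dots> \<le> exp 1" using window[OF j] P_pos[OF j] by (simp add: divide_le_eq)
    finally show ?thesis .
  qed
  then have "(\<Sum>j\<in>{1..K}. P h t j v * lhat h t j v) \<le> real K * exp 1"
    using sum_mono[of "{1..K}" "\<lambda>j. P h t j v * lhat h t j v" "\<lambda>_. exp 1"] by simp
  then have "\<eta> * (\<Sum>j\<in>{1..K}. P h t j v * lhat h t j v) \<le> \<eta> * (real K * exp 1)"
    using eta_pos by (intro mult_left_mono) auto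
  also have "\<dots> \<le> 1 / (real d + 1)" using eta_small by (simp add: field_simps)
  finally have "1 - 1 / (real d + 1) \<le> 1 - \<eta> * (\<Sum>j\<in>{1..K}. P h t j v * lhat h t j v)"
    by simp
  moreover have "1 - 1 / (real d + 1) = real d / (real d + 1)" by (simp add: field_simps)
  ultimately show ?thesis using Z_ge_one_minus_mixed_lhat[of h t v] by linarith
qed

lemma P_Suc_le_div_Z:
  assumes i: "i \<in> {1..K}" and t: "d < t"
  shows "P h (Suc t) i v \<le> P h t i v / Z h t v"
proof -
  have "P h t i v * exp (- \<eta> * lhat h t i v) \<le> P h t i v"
    using lhat_nonneg[OF i] eta_pos P_pos[OF i] by (simp add: mult_le_cancel_left1)
  then show ?thesis using t Z_pos[of h t v] by (simp add: P_Suc divide_right_mono)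
qed

text \<open>Strong induction on \<open>t\<close>: the hypothesis for the rounds \<open>t - d, \<dots>, t - 1\<close> provides exactly
  the window bound needed to control the normaliser at round \<open>t\<close>.\<close>

lemma P_Suc_le:
  assumes d: "d \<ge> 1" and v: "v \<in> {1..N}" and i: "i \<in> {1..K}"
  shows "P h (Suc t) i v \<le> (real d + 1) / real d * P h t i v"
  using i
proof (induction t arbitrary: i rule: less_induct)
  case (less t)
  define \<rho> where "\<rho> = (real d + 1) / real d"
  have \<rho>: "\<rho> \<ge> 1" using d by (simp add: \<rho>_def)
  show ?case
  proof (cases "d < t")
    case False
    have "P h t i v \<le> \<rho> * P h t i v"
      using mult_right_mono[OF \<rho> P_nonneg[OF less.prems]] by simp
    then show ?thesis using False P_Suc_eq_before_feedback unfolding \<rho>_def by simp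
  next
    case True
    have "P h t j v \<le> exp 1 * P h (t - d) j v" if j: "j \<in> {1..K}" for j
    proof -
      have "P h (t - d + d) j v \<le> \<rho> ^ d * P h (t - d) j v"
        using less.IH j \<rho> True unfolding \<rho>_def
        by (intro geometric_growth_le[where f = "\<lambda>r. P h r j v"]) auto
      also have "\<dots> \<le> exp 1 * P h (t - d) j v"
        using one_plus_inverse_power_le_exp1[OF d] P_nonneg[OF j] unfolding \<rho>_def
        by (intro mult_right_mono) auto
      finally show ?thesis using True by simp
    qed
    then have Z: "Z h t v \<ge> real d / (real d + 1)" by (rule Z_ge_when_window_bounded[OF v True])
    have "P h (Suc t) i v \<le> P h t i v / Z h t v" by (rule P_Suc_le_div_Z[OF less.prems True])
    also have "\<dots> \<le> P h t i v / (real d / (real d + 1))"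
      using Z d P_nonneg[OF less.prems] Z_pos[of h t v] by (intro divide_left_mono) auto
    finally show ?thesis by (simp add: mult.commute)
  qed
qed

lemma P_growth_le_exp1:
  assumes v: "v \<in> {1..N}" and i: "i \<in> {1..K}" and m: "m \<le> d"
  shows "P h (u + m) i v \<le> exp 1 * P h u i v"
proof (cases "d = 0")
  case True
  then show ?thesis using m P_nonneg[OF i, of h u v] by (simp add: mult_le_cancel_right1)
next
  case False
  define \<rho> where "\<rho> = (real d + 1) / real d"
  have \<rho>: "\<rho> \<ge> 1" using False by (simp add: \<rho>_def)
  have "P h (u + m) i v \<le> \<rho> ^ m * P h u i v"
    using P_Suc_le[OF _ v i] False \<rho> unfolding \<rho>_def
    by (intro geometric_growth_le[where f = "\<lambda>r. P h r i v"]) auto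
  also have "\<dots> \<le> \<rho> ^ d * P h u i v"
    using \<rho> m P_nonneg[OF i] by (intro mult_right_mono power_increasing) auto
  also have "\<dots> \<le> exp 1 * P h u i v"
    using one_plus_inverse_power_le_exp1 False P_nonneg[OF i] unfolding \<rho>_def
    by (intro mult_right_mono) auto
  finally show ?thesis .
qed

section \<open>Regret of a single agent\<close>

lemma ln_Z_le: "ln (Z h t v) \<le> - \<eta> * (\<Sum>j\<in>{1..K}. P h t j v * lhat h t j v)
    + \<eta>\<^sup>2 / 2 * (\<Sum>j\<in>{1..K}. P h t j v * (lhat h t j v)\<^sup>2)"
proof -
  have "Z h t v \<le> (\<Sum>j\<in>{1..K}. P h t j v * (1 - \<eta> * lhat h t j v + (\<eta> * lhat h t j v)\<^sup>2 / 2))"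
    unfolding Z_def
  proof (intro sum_mono mult_left_mono)
    fix j assume j: "j \<in> {1..K}"
    show "exp (- \<eta> * lhat h t j v) \<le> 1 - \<eta> * lhat h t j v + (\<eta> * lhat h t j v)\<^sup>2 / 2"
      using exp_neg_le_quadratic[of "\<eta> * lhat h t j v"] lhat_nonneg[OF j] eta_pos by simp
  qed simp
  also have "\<dots> = 1 - \<eta> * (\<Sum>j\<in>{1..K}. P h t j v * lhat h t j v)
      + \<eta>\<^sup>2 / 2 * (\<Sum>j\<in>{1..K}. P h t j v * (lhat h t j v)\<^sup>2)"
    by (simp add: algebra_simps sum.distrib sum_subtractf sum_distrib_left power2_eq_square P_sum)
  finally show ?thesis using ln_le_minus_one[OF Z_pos[of h t v]] by linarith
qed

lemma ln_P_Suc: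
  assumes k: "k \<in> {1..K}"
  shows "ln (P h (Suc n) k v) = - ln (real K) + (\<Sum>t\<in>{1..n}. - \<eta> * lhat h t k v - ln (Z h t v))"
proof (induction n)
  case 0 then show ?case using K_pos by (simp add: P_Suc P_0 ln_div)
next
  case (Suc n)
  have "ln (P h (Suc (Suc n)) k v)
      = ln (P h (Suc n) k v * exp (- \<eta> * lhat h (Suc n) k v) / Z h (Suc n) v)"
    by (simp add: P_Suc)
  also have "\<dots> = ln (P h (Suc n) k v) + (- \<eta> * lhat h (Suc n) k v) - ln (Z h (Suc n) v)"
    using P_pos[OF k, of h "Suc n" v] Z_pos[of h "Suc n" v] by (simp add: ln_div ln_mult)
  finally show ?case using Suc by (simp add: atLeastAtMostSuc_conv)
qed

text \<open>The standard potential argument for exponential weights, applied along a single history: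
  \<open>ln P h (n + 1) k v \<le> 0\<close> and each \<open>ln (Z h t v)\<close> is bounded by \<open>ln_Z_le\<close>.\<close>

lemma hedge_bound:
  assumes k: "k \<in> {1..K}"
  shows "(\<Sum>t\<in>{1..n}. \<Sum>j\<in>{1..K}. P h t j v * lhat h t j v)
    \<le> ln (real K) / \<eta> + (\<Sum>t\<in>{1..n}. lhat h t k v)
      + \<eta> / 2 * (\<Sum>t\<in>{1..n}. \<Sum>j\<in>{1..K}. P h t j v * (lhat h t j v)\<^sup>2)"
proof -
  define M1 where "M1 t = (\<Sum>j\<in>{1..K}. P h t j v * lhat h t j v)" for t
  define M2 where "M2 t = (\<Sum>j\<in>{1..K}. P h t j v * (lhat h t j v)\<^sup>2)" for t
  have "ln (P h (Suc n) k v) \<le> 0" using P_pos[OF k] P_le_1[OF k] by simp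
  then have "- ln (real K) + (\<Sum>t\<in>{1..n}. - \<eta> * lhat h t k v - ln (Z h t v)) \<le> 0"
    unfolding ln_P_Suc[OF k] .
  moreover have "(\<Sum>t\<in>{1..n}. - \<eta> * lhat h t k v + \<eta> * M1 t - \<eta>\<^sup>2 / 2 * M2 t)
      \<le> (\<Sum>t\<in>{1..n}. - \<eta> * lhat h t k v - ln (Z h t v))"
    using ln_Z_le unfolding M1_def M2_def by (intro sum_mono) (simp add: algebra_simps)
  moreover have "(\<Sum>t\<in>{1..n}. - \<eta> * lhat h t k v + \<eta> * M1 t - \<eta>\<^sup>2 / 2 * M2 t)
      = - \<eta> * (\<Sum>t\<in>{1..n}. lhat h t k v) + \<eta> * sum M1 {1..n} - \<eta>\<^sup>2 / 2 * sum M2 {1..n}"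
    by (simp add: sum.distrib sum_subtractf sum_distrib_left sum_negf)
  ultimately have "\<eta> * sum M1 {1..n}
      \<le> \<eta> * (ln (real K) / \<eta> + (\<Sum>t\<in>{1..n}. lhat h t k v) + \<eta> / 2 * sum M2 {1..n})"
    using eta_pos by (simp add: algebra_simps power2_eq_square)
  then show ?thesis unfolding M1_def M2_def using eta_pos by simp
qed

lemma depends_upto_fun_q: assumes "s \<le> Suc m" shows "depends_upto m (\<lambda>h. \<phi> (q h s i v))"
proof (rule depends_uptoI)
  fix h h' :: history assume a: "\<And>x. fst x \<le> m \<Longrightarrow> h x = h' x"
  have "q h s i v = q h' s i v" by (rule depends_uptoD[OF depends_upto_q[OF assms] a])
  then show "\<phi> (q h s i v) = \<phi> (q h' s i v)" by simp
qed

lemma lhat_shift: "1 \<le> u \<Longrightarrow> lhat h (u + d) i v = L u i / q h u i v * obs h u i v"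
  unfolding lhat_def by simp

lemma expect_lhat:
  assumes u: "1 \<le> u" "u \<le> n" and v: "v \<in> {1..N}" and i: "i \<in> {1..K}" and c: "depends_upto (u - 1) c"
  shows "expect n (\<lambda>h. c h * lhat h (u + d) i v) = expect n (\<lambda>h. c h * L u i)"
proof -
  have c': "depends_upto (u - 1) (\<lambda>h. c h * (L u i / q h u i v))"
    using u by (intro depends_upto_mult[OF c] depends_upto_fun_q[where \<phi>="\<lambda>x. L u i / x"]) auto
  have "expect n (\<lambda>h. c h * lhat h (u + d) i v)
      = expect n (\<lambda>h. (c h * (L u i / q h u i v)) * obs h u i v)"
    using u by (simp add: lhat_shift mult_ac)
  also have "\<dots> = expect n (\<lambda>h. (c h * (L u i / q h u i v)) * q h u i v)"
    by (rule expect_obs[OF u v i c'])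
  also have "\<dots> = expect n (\<lambda>h. c h * L u i)"
  proof (rule expect_cong)
    fix h show "c h * (L u i / q h u i v) * q h u i v = c h * L u i"
      using q_pos[OF v i, of h u] by simp
  qed
  finally show ?thesis .
qed

lemma expect_lhat_sq:
  assumes u: "1 \<le> u" "u \<le> n" and v: "v \<in> {1..N}" and i: "i \<in> {1..K}" and c: "depends_upto (u - 1) c"
  shows "expect n (\<lambda>h. c h * (lhat h (u + d) i v)\<^sup>2) = expect n (\<lambda>h. c h * (L u i)\<^sup>2 / q h u i v)"
proof -
  have c': "depends_upto (u - 1) (\<lambda>h. c h * ((L u i)\<^sup>2 / (q h u i v)\<^sup>2))"
    using u
    by (intro depends_upto_mult[OF c] depends_upto_fun_q[where \<phi>="\<lambda>x. (L u i)\<^sup>2 / x\<^sup>2"]) auto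
  have "expect n (\<lambda>h. c h * (lhat h (u + d) i v)\<^sup>2)
      = expect n (\<lambda>h. (c h * ((L u i)\<^sup>2 / (q h u i v)\<^sup>2)) * obs h u i v)"
  proof (rule expect_cong)
    fix h
    have "(lhat h (u + d) i v)\<^sup>2 = (L u i / q h u i v)\<^sup>2 * (obs h u i v * obs h u i v)"
      using u by (simp add: lhat_shift power2_eq_square mult_ac)
    then show "c h * (lhat h (u + d) i v)\<^sup>2 = (c h * ((L u i)\<^sup>2 / (q h u i v)\<^sup>2)) * obs h u i v"
      using obs_bounds(3)[of h u i v] by (simp add: power_divide)
  qed
  also have "\<dots> = expect n (\<lambda>h. (c h * ((L u i)\<^sup>2 / (q h u i v)\<^sup>2)) * q h u i v)"
    by (rule expect_obs[OF u v i c'])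
  also have "\<dots> = expect n (\<lambda>h. c h * (L u i)\<^sup>2 / q h u i v)"
  proof (rule expect_cong)
    fix h show "c h * ((L u i)\<^sup>2 / (q h u i v)\<^sup>2) * q h u i v = c h * (L u i)\<^sup>2 / q h u i v"
      using q_pos[OF v i, of h u] by (simp add: power2_eq_square)
  qed
  finally show ?thesis .
qed

definition lhat_window :: "history \<Rightarrow> nat \<Rightarrow> nat \<Rightarrow> nat \<Rightarrow> real" where
  "lhat_window h s i v = (\<Sum>r\<in>{s..<s+d}. lhat h r i v)"

lemma lhat_window_nonneg: "i \<in> {1..K} \<Longrightarrow> lhat_window h s i v \<ge> 0"
  unfolding lhat_window_def by (intro sum_nonneg lhat_nonneg)

lemma depends_upto_lhat_window:
  assumes "1 \<le> s"
  shows "depends_upto (s - 1) (\<lambda>h. lhat_window h s i v)"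
  unfolding lhat_window_def using assms by (intro depends_upto_sum depends_upto_lhat) auto

lemma depends_upto_P_round: "1 \<le> u \<Longrightarrow> depends_upto (u - 1) (\<lambda>h. P h u i v)"
  by (intro depends_upto_P) simp

lemma expect_mixed_loss_le_1: "expect n (\<lambda>h. \<Sum>i\<in>{1..K}. P h u i v * L u i) \<le> 1"
proof -
  have "expect n (\<lambda>h. \<Sum>i\<in>{1..K}. P h u i v * L u i) \<le> expect n (\<lambda>h. \<Sum>i\<in>{1..K}. P h u i v)"
    using loss_bounded by (intro expect_mono sum_mono) (auto intro: mult_left_le)
  also have "\<dots> = 1" by (simp add: P_sum expect_const)
  finally show ?thesis .
qed

text \<open>The estimate of round \<open>s\<close> enters the weights only after round \<open>s + d\<close>; in between, the
  weights can have shrunk by at most the factor \<open>1 - \<eta> * lhat_window\<close> (\<open>P_lower\<close>), which is the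
  price of the delay.\<close>

lemma expect_mixed_loss_le_delayed:
  assumes s: "1 \<le> s" "s \<le> n" and v: "v \<in> {1..N}"
  shows "expect n (\<lambda>h. \<Sum>i\<in>{1..K}. P h s i v * L s i)
    \<le> expect n (\<lambda>h. \<Sum>i\<in>{1..K}. P h (s + d) i v * lhat h (s + d) i v)
      + \<eta> * expect n (\<lambda>h. \<Sum>i\<in>{1..K}. P h s i v * lhat_window h s i v)"
proof -
  define w where "w i h = P h s i v * (1 - \<eta> * lhat_window h s i v)" for i h
  have w_past: "depends_upto (s - 1) (w i)" for i
    unfolding w_def using s
    by (intro depends_upto_mult depends_upto_P_round depends_upto_comp[where \<phi> = "\<lambda>x. 1 - \<eta> * x"]
        depends_upto_lhat_window) auto
  have "expect n (\<lambda>h. \<Sum>i\<in>{1..K}. P h s i v * L s i)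
        - \<eta> * expect n (\<lambda>h. \<Sum>i\<in>{1..K}. P h s i v * lhat_window h s i v)
      = expect n (\<lambda>h. \<Sum>i\<in>{1..K}. P h s i v * L s i - \<eta> * (P h s i v * lhat_window h s i v))"
    by (simp add: expect_diff[symmetric] expect_cmult[symmetric] sum_subtractf sum_distrib_left)
  also have "\<dots> \<le> expect n (\<lambda>h. \<Sum>i\<in>{1..K}. w i h * L s i)"
  proof (intro expect_mono sum_mono)
    fix h i assume i: "i \<in> {1..K}"
    have "\<eta> * (P h s i v * lhat_window h s i v) * L s i \<le> \<eta> * (P h s i v * lhat_window h s i v)"
      using loss_bounded[OF i] eta_pos P_nonneg[OF i] lhat_window_nonneg[OF i]
      by (intro mult_left_le) auto
    then show "P h s i v * L s i - \<eta> * (P h s i v * lhat_window h s i v) \<le> w i h * L s i"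
      unfolding w_def by (simp add: algebra_simps)
  qed
  also have "\<dots> = expect n (\<lambda>h. \<Sum>i\<in>{1..K}. w i h * lhat h (s + d) i v)"
    unfolding expect_sum using expect_lhat[OF s v _ w_past] by simp
  also have "\<dots> \<le> expect n (\<lambda>h. \<Sum>i\<in>{1..K}. P h (s + d) i v * lhat h (s + d) i v)"
  proof (intro expect_mono sum_mono mult_right_mono)
    fix h i assume i: "i \<in> {1..K}"
    show "w i h \<le> P h (s + d) i v"
      using P_lower[OF i, of h s v d] unfolding w_def lhat_window_def by simp
    show "0 \<le> lhat h (s + d) i v" using lhat_nonneg[OF i] .
  qed
  finally show ?thesis by linarith
qed

text \<open>Each estimate received in the window is compared with the weights \<open>d\<close> rounds before it was
  formed, which are within a factor \<open>e\<close> (\<open>P_growth_le_exp1\<close>); unbiasedness then bounds each of the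
  \<open>d\<close> terms by \<open>e\<close>.\<close>

lemma expect_delay_drift_le:
  assumes s: "1 \<le> s" "s \<le> n" and v: "v \<in> {1..N}"
  shows "expect n (\<lambda>h. \<Sum>i\<in>{1..K}. P h s i v * lhat_window h s i v) \<le> real d * exp 1"
proof -
  have "expect n (\<lambda>h. \<Sum>i\<in>{1..K}. P h s i v * lhat_window h s i v)
      = (\<Sum>r\<in>{s..<s+d}. expect n (\<lambda>h. \<Sum>i\<in>{1..K}. P h s i v * lhat h r i v))"
    unfolding lhat_window_def sum_distrib_left expect_sum[symmetric]
    by (intro expect_cong) (rule sum.swap)
  also have "\<dots> \<le> (\<Sum>r\<in>{s..<s+d}. exp 1)"
  proof (intro sum_mono)
    fix r assume r: "r \<in> {s..<s+d}"
    show "expect n (\<lambda>h. \<Sum>i\<in>{1..K}. P h s i v * lhat h r i v) \<le> exp 1"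
    proof (cases "d < r")
      case False
      then show ?thesis by (simp add: lhat_zero expect_const)
    next
      case True
      define u where "u = r - d"
      have u: "1 \<le> u" "u \<le> n" "r = u + d" "s = u + (s - u)" "s - u \<le> d"
        using True r s unfolding u_def by auto
      have "expect n (\<lambda>h. \<Sum>i\<in>{1..K}. P h s i v * lhat h r i v)
          \<le> expect n (\<lambda>h. \<Sum>i\<in>{1..K}. exp 1 * (P h u i v * lhat h (u + d) i v))"
      proof (intro expect_mono sum_mono)
        fix h i assume i: "i \<in> {1..K}"
        have "P h s i v \<le> exp 1 * P h u i v"
          using P_growth_le_exp1[OF v i u(5), of h u] u(4) by simp
        then show "P h s i v * lhat h r i v \<le> exp 1 * (P h u i v * lhat h (u + d) i v)"
          using lhat_nonneg[OF i, of h r v] u(3)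
          by (simp add: mult_right_mono mult.assoc[symmetric])
      qed
      also have "\<dots> = exp 1 * (\<Sum>i\<in>{1..K}. expect n (\<lambda>h. P h u i v * lhat h (u + d) i v))"
        by (simp add: sum_distrib_left[symmetric] expect_cmult expect_sum)
      also have "(\<Sum>i\<in>{1..K}. expect n (\<lambda>h. P h u i v * lhat h (u + d) i v))
          = (\<Sum>i\<in>{1..K}. expect n (\<lambda>h. P h u i v * L u i))"
        using u by (intro sum.cong refl expect_lhat v depends_upto_P_round) auto
      also have "\<dots> = expect n (\<lambda>h. \<Sum>i\<in>{1..K}. P h u i v * L u i)"
        by (rule expect_sum[symmetric])
      also have "exp 1 * \<dots> \<le> exp 1 * 1" using expect_mixed_loss_le_1 by (intro mult_left_mono) auto
      finally show ?thesis by simp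
    qed
  qed
  also have "\<dots> = real d * exp 1" by simp
  finally show ?thesis .
qed

lemma expect_second_moment_le:
  assumes s: "1 \<le> s" "s \<le> n" and v: "v \<in> {1..N}"
  shows "expect n (\<lambda>h. \<Sum>i\<in>{1..K}. P h (s + d) i v * (lhat h (s + d) i v)\<^sup>2)
    \<le> exp 1 * expect n (\<lambda>h. \<Sum>i\<in>{1..K}. P h s i v / q h s i v)"
proof -
  have "expect n (\<lambda>h. \<Sum>i\<in>{1..K}. P h (s + d) i v * (lhat h (s + d) i v)\<^sup>2)
      \<le> expect n (\<lambda>h. \<Sum>i\<in>{1..K}. exp 1 * P h s i v * (lhat h (s + d) i v)\<^sup>2)"
    using P_growth_le_exp1[OF v _ order_refl] by (intro expect_mono sum_mono mult_right_mono) auto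
  also have "\<dots> = expect n (\<lambda>h. \<Sum>i\<in>{1..K}. exp 1 * P h s i v * (L s i)\<^sup>2 / q h s i v)"
    unfolding expect_sum using s v
    by (intro sum.cong refl expect_lhat_sq depends_upto_mult[OF depends_upto_const]
        depends_upto_P_round) auto
  also have "\<dots> \<le> expect n (\<lambda>h. \<Sum>i\<in>{1..K}. exp 1 * (P h s i v / q h s i v))"
  proof (intro expect_mono sum_mono)
    fix h i assume i: "i \<in> {1..K}"
    have "exp 1 * P h s i v * (L s i)\<^sup>2 \<le> exp 1 * P h s i v"
      using loss_bounded[OF i] P_nonneg[OF i] by (simp add: mult_left_le power_le_one)
    then show "exp 1 * P h s i v * (L s i)\<^sup>2 / q h s i v \<le> exp 1 * (P h s i v / q h s i v)"
      using q_pos[OF v i, of h s] by (simp add: divide_right_mono)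
  qed
  also have "\<dots> = expect n (\<lambda>h. exp 1 * (\<Sum>i\<in>{1..K}. P h s i v / q h s i v))"
    by (simp add: sum_distrib_left)
  also have "\<dots> = exp 1 * expect n (\<lambda>h. \<Sum>i\<in>{1..K}. P h s i v / q h s i v)"
    by (rule expect_cmult)
  finally show ?thesis .
qed

lemma expect_lhat_eq_loss:
  assumes s: "1 \<le> s" "s \<le> n" and v: "v \<in> {1..N}" and k: "k \<in> {1..K}"
  shows "expect n (\<lambda>h. lhat h (s + d) k v) = L s k"
  using expect_lhat[OF s v k depends_upto_const[of "s - 1" 1]] by (simp add: expect_const)

lemma expect_agent_loss_le:
  assumes v: "v \<in> {1..N}"
  shows "expect n (\<lambda>h. \<Sum>t\<in>{1..n}. L t (h (t, v)))
    \<le> (\<Sum>t\<in>{1..n-d}. expect n (\<lambda>h. \<Sum>i\<in>{1..K}. P h t i v * L t i)) + real d"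
proof -
  define f where "f t = expect n (\<lambda>h. \<Sum>i\<in>{1..K}. P h t i v * L t i)" for t
  have "expect n (\<lambda>h. \<Sum>t\<in>{1..n}. L t (h (t, v))) = (\<Sum>t\<in>{1..n}. expect n (\<lambda>h. L t (h (t, v))))"
    by (rule expect_sum)
  also have "\<dots> = (\<Sum>t\<in>{1..n}. f t)"
    unfolding f_def using v by (intro sum.cong refl expect_action_loss) (auto simp: mult.commute)
  also have "\<dots> = (\<Sum>t\<in>{1..n-d}. f t) + (\<Sum>t\<in>{n-d<..n}. f t)"
    by (subst sum.union_disjoint[symmetric]) (auto intro!: sum.cong)
  also have "(\<Sum>t\<in>{n-d<..n}. f t) \<le> (\<Sum>t\<in>{n-d<..n}. 1)"
    unfolding f_def by (intro sum_mono expect_mixed_loss_le_1)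
  finally show ?thesis unfolding f_def by simp
qed

lemma sum_expect_mixed_loss_le:
  assumes v: "v \<in> {1..N}"
  shows "(\<Sum>t\<in>{1..n-d}. expect n (\<lambda>h. \<Sum>i\<in>{1..K}. P h t i v * L t i))
    \<le> expect n (\<lambda>h. \<Sum>t\<in>{1..n}. \<Sum>i\<in>{1..K}. P h t i v * lhat h t i v) + real n * \<eta> * real d * exp 1"
proof -
  have "(\<Sum>t\<in>{1..n-d}. expect n (\<lambda>h. \<Sum>i\<in>{1..K}. P h t i v * L t i))
      \<le> (\<Sum>s\<in>{1..n-d}. expect n (\<lambda>h. \<Sum>i\<in>{1..K}. P h (s + d) i v * lhat h (s + d) i v)
          + \<eta> * (real d * exp 1))"
  proof (intro sum_mono)
    fix s assume "s \<in> {1..n-d}"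
    then have s: "1 \<le> s" "s \<le> n" by auto
    show "expect n (\<lambda>h. \<Sum>i\<in>{1..K}. P h s i v * L s i)
        \<le> expect n (\<lambda>h. \<Sum>i\<in>{1..K}. P h (s + d) i v * lhat h (s + d) i v) + \<eta> * (real d * exp 1)"
      using expect_mixed_loss_le_delayed[OF s v] expect_delay_drift_le[OF s v]
        mult_left_mono[OF _ less_imp_le[OF eta_pos]] by fastforce
  qed
  also have "\<dots> = expect n (\<lambda>h. \<Sum>s\<in>{1..n-d}. \<Sum>i\<in>{1..K}. P h (s + d) i v * lhat h (s + d) i v)
      + real (n - d) * \<eta> * real d * exp 1"
    by (simp add: sum.distrib expect_sum)
  also have "expect n (\<lambda>h. \<Sum>s\<in>{1..n-d}. \<Sum>i\<in>{1..K}. P h (s + d) i v * lhat h (s + d) i v)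
      = expect n (\<lambda>h. \<Sum>t\<in>{1..n}. \<Sum>i\<in>{1..K}. P h t i v * lhat h t i v)"
    by (intro expect_cong sum_shift_vanishing[symmetric]) (simp add: lhat_zero)
  also have "real (n - d) * \<eta> * real d * exp 1 \<le> real n * \<eta> * real d * exp 1"
    using eta_pos by (intro mult_right_mono) auto
  finally show ?thesis by simp
qed

lemma expect_sum_lhat_le:
  assumes v: "v \<in> {1..N}" and k: "k \<in> {1..K}"
  shows "expect n (\<lambda>h. \<Sum>t\<in>{1..n}. lhat h t k v) \<le> (\<Sum>t\<in>{1..n}. L t k)"
proof -
  have "expect n (\<lambda>h. \<Sum>t\<in>{1..n}. lhat h t k v) = expect n (\<lambda>h. \<Sum>s\<in>{1..n-d}. lhat h (s + d) k v)"
    by (intro expect_cong sum_shift_vanishing) (simp add: lhat_zero)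
  also have "\<dots> = (\<Sum>s\<in>{1..n-d}. expect n (\<lambda>h. lhat h (s + d) k v))" by (rule expect_sum)
  also have "\<dots> = (\<Sum>s\<in>{1..n-d}. L s k)" using v k by (intro sum.cong refl expect_lhat_eq_loss) auto
  also have "\<dots> \<le> (\<Sum>t\<in>{1..n}. L t k)" using loss_bounded[OF k] by (intro sum_mono2) auto
  finally show ?thesis .
qed

lemma expect_sum_second_moment_le:
  assumes v: "v \<in> {1..N}"
  shows "expect n (\<lambda>h. \<Sum>t\<in>{1..n}. \<Sum>i\<in>{1..K}. P h t i v * (lhat h t i v)\<^sup>2)
    \<le> exp 1 * (\<Sum>s\<in>{1..n-d}. expect n (\<lambda>h. \<Sum>i\<in>{1..K}. P h s i v / q h s i v))"
proof -
  have "expect n (\<lambda>h. \<Sum>t\<in>{1..n}. \<Sum>i\<in>{1..K}. P h t i v * (lhat h t i v)\<^sup>2)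
      = (\<Sum>s\<in>{1..n-d}. expect n (\<lambda>h. \<Sum>i\<in>{1..K}. P h (s + d) i v * (lhat h (s + d) i v)\<^sup>2))"
    unfolding expect_sum[symmetric] by (intro expect_cong sum_shift_vanishing) (simp add: lhat_zero)
  also have "\<dots> \<le> (\<Sum>s\<in>{1..n-d}. exp 1 * expect n (\<lambda>h. \<Sum>i\<in>{1..K}. P h s i v / q h s i v))"
    using v by (intro sum_mono expect_second_moment_le) auto
  finally show ?thesis by (simp add: sum_distrib_left)
qed

lemma expected_loss_le:
  assumes v: "v \<in> {1..N}" and k: "k \<in> {1..K}"
  shows "expect n (\<lambda>h. \<Sum>t\<in>{1..n}. L t (h (t, v)))
    \<le> real d + ln (real K) / \<eta> + (\<Sum>t\<in>{1..n}. L t k) + real n * \<eta> * real d * exp 1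
       + \<eta> * exp 1 / 2 * (\<Sum>s\<in>{1..n-d}. expect n (\<lambda>h. \<Sum>i\<in>{1..K}. P h s i v / q h s i v))"
proof -
  have "expect n (\<lambda>h. \<Sum>t\<in>{1..n}. \<Sum>i\<in>{1..K}. P h t i v * lhat h t i v)
      \<le> expect n (\<lambda>h. ln (real K) / \<eta> + (\<Sum>t\<in>{1..n}. lhat h t k v)
          + \<eta> / 2 * (\<Sum>t\<in>{1..n}. \<Sum>i\<in>{1..K}. P h t i v * (lhat h t i v)\<^sup>2))"
    by (intro expect_mono hedge_bound[OF k])
  also have "\<dots> = ln (real K) / \<eta> + expect n (\<lambda>h. \<Sum>t\<in>{1..n}. lhat h t k v)
      + \<eta> / 2 * expect n (\<lambda>h. \<Sum>t\<in>{1..n}. \<Sum>i\<in>{1..K}. P h t i v * (lhat h t i v)\<^sup>2)"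
    by (simp only: expect_add expect_cmult expect_const)
  finally have "expect n (\<lambda>h. \<Sum>t\<in>{1..n}. \<Sum>i\<in>{1..K}. P h t i v * lhat h t i v)
      \<le> ln (real K) / \<eta> + expect n (\<lambda>h. \<Sum>t\<in>{1..n}. lhat h t k v)
        + \<eta> / 2 * expect n (\<lambda>h. \<Sum>t\<in>{1..n}. \<Sum>i\<in>{1..K}. P h t i v * (lhat h t i v)\<^sup>2)" .
  moreover have "\<eta> / 2 * expect n (\<lambda>h. \<Sum>t\<in>{1..n}. \<Sum>i\<in>{1..K}. P h t i v * (lhat h t i v)\<^sup>2)
      \<le> \<eta> * exp 1 / 2 * (\<Sum>s\<in>{1..n-d}. expect n (\<lambda>h. \<Sum>i\<in>{1..K}. P h s i v / q h s i v))"
    using mult_left_mono[OF expect_sum_second_moment_le[OF v], of "\<eta> / 2"] eta_pos by simp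
  ultimately show ?thesis
    using expect_agent_loss_le[OF v, where n = n] sum_expect_mixed_loss_le[OF v, where n = n]
      expect_sum_lhat_le[OF v k, where n = n]
    by linarith
qed

section \<open>Averaging over the agents\<close>

text \<open>Since \<open>1 - x \<le> e\<^sup>-\<^sup>x\<close>, \<open>q \<ge> 1 - exp (- \<Sum>\<^sub>u p\<^sub>u)\<close> over the neighbourhood, and the chord bound for
  \<open>exp\<close> on \<open>[0, 1]\<close> turns this into \<open>q \<ge> (1 - e\<^sup>-\<^sup>1) min 1 (\<Sum>\<^sub>u p\<^sub>u)\<close>.\<close>

lemma q_ge_one_minus_exp_nbhd_mass:
  assumes i: "i \<in> {1..K}"
  shows "q h s i v \<ge> 1 - exp (- (\<Sum>u\<in>nbhd E N d v. P h s i u))"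
proof -
  have "(\<Prod>u\<in>nbhd E N d v. (1 - P h s i u)) \<le> (\<Prod>u\<in>nbhd E N d v. exp (- P h s i u))"
  proof (intro prod_mono conjI)
    fix u
    show "0 \<le> 1 - P h s i u" using P_le_1[OF i] by simp
    show "1 - P h s i u \<le> exp (- P h s i u)" using exp_ge_add_one_self[of "- P h s i u"] by simp
  qed
  also have "\<dots> = exp (- (\<Sum>u\<in>nbhd E N d v. P h s i u))"
    using finite_nbhd by (simp add: exp_sum sum_negf[symmetric])
  finally show ?thesis unfolding q_def by simp
qed

lemma P_div_q_le:
  assumes v: "v \<in> {1..N}" and i: "i \<in> {1..K}"
  shows "P h s i v / q h s i v
    \<le> (P h s i v / (\<Sum>u\<in>nbhd E N d v. P h s i u) + P h s i v) / (1 - exp (-1))"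
proof -
  define p where "p = P h s i v"
  define PV where "PV = (\<Sum>u\<in>nbhd E N d v. P h s i u)"
  define c where "c = 1 - exp (-1::real)"
  have c: "c > 0" unfolding c_def by simp
  have p: "p > 0" unfolding p_def using P_pos[OF i] .
  have pPV: "p \<le> PV" unfolding p_def PV_def using nbhd_refl[OF v] finite_nbhd i
    by (intro member_le_sum) auto
  have q1: "q h s i v \<ge> 1 - exp (- PV)"
    unfolding PV_def by (rule q_ge_one_minus_exp_nbhd_mass[OF i])
  have qp: "q h s i v > 0" using q_pos[OF v i] .
  have key: "p / q h s i v \<le> (p / PV) / c \<or> p / q h s i v \<le> p / c"
  proof (cases "PV \<ge> 1")
    case True
    then have "exp (- PV) \<le> exp (-1)" by simp
    then have "q h s i v \<ge> c" using q1 unfolding c_def by linarith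
    then have "p / q h s i v \<le> p / c" using p c by (intro divide_left_mono) auto
    then show ?thesis by simp
  next
    case False
    have "exp (- PV) \<le> 1 - c * PV"
      unfolding c_def using pPV p False by (intro exp_neg_le_chord) auto
    then have "q h s i v \<ge> c * PV" using q1 by simp
    then have "p / q h s i v \<le> p / (c * PV)" using p c pPV qp by (intro divide_left_mono) auto
    then show ?thesis by (simp add: mult.commute)
  qed
  have "p / PV \<ge> 0" using p pPV by simp
  then have "(p / PV) / c \<le> (p / PV + p) / c" "p / c \<le> (p / PV + p) / c"
    using c p divide_right_mono[of "p / PV" "p / PV + p" c] divide_right_mono[of p "p / PV + p" c]
    by auto
  then show ?thesis using key unfolding p_def PV_def c_def by linarith
qed

lemma sum_P_div_q_le:
  "(\<Sum>v\<in>{1..N}. \<Sum>i\<in>{1..K}. P h s i v / q h s i v)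
    \<le> (real K * real (alpha_pow E N d) + real N) / (1 - exp (-1))"
proof -
  define g where "g i v = P h s i v / (\<Sum>u\<in>nbhd E N d v. P h s i u)" for i v
  have "(\<Sum>v\<in>{1..N}. \<Sum>i\<in>{1..K}. P h s i v / q h s i v)
      \<le> (\<Sum>v\<in>{1..N}. \<Sum>i\<in>{1..K}. (g i v + P h s i v) / (1 - exp (-1)))"
    unfolding g_def by (intro sum_mono P_div_q_le) auto
  also have "\<dots> = ((\<Sum>v\<in>{1..N}. \<Sum>i\<in>{1..K}. g i v) + real N) / (1 - exp (-1))"
    by (simp add: sum_divide_distrib[symmetric] sum.distrib P_sum)
  also have "(\<Sum>v\<in>{1..N}. \<Sum>i\<in>{1..K}. g i v) = (\<Sum>i\<in>{1..K}. \<Sum>v\<in>{1..N}. g i v)"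
    by (rule sum.swap)
  also have "(\<Sum>i\<in>{1..K}. \<Sum>v\<in>{1..N}. g i v) \<le> (\<Sum>i\<in>{1..K}. real (alpha_pow E N d))"
    unfolding g_def using E_sym P_pos by (intro sum_mono sum_div_nbhd_weight_le_alpha_pow) auto
  finally show ?thesis by (simp add: divide_right_mono)
qed

lemma coop_exp_loss_eq_expect:
  "coop_exp_loss E N K d \<eta> L n v = expect n (\<lambda>h. \<Sum>t\<in>{1..n}. L t (h (t, v)))"
  unfolding coop_exp_loss_def expect_def hist_def hist_prob_def by simp

lemma sum_expect_P_div_q_le:
  "(\<Sum>v\<in>{1..N}. \<Sum>s\<in>{1..n-d}. expect n (\<lambda>h. \<Sum>i\<in>{1..K}. P h s i v / q h s i v))
    \<le> real n * ((real K * real (alpha_pow E N d) + real N) / (1 - exp (-1)))"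
proof -
  define G where "G = (real K * real (alpha_pow E N d) + real N) / (1 - exp (-1))"
  have "(\<Sum>v\<in>{1..N}. \<Sum>s\<in>{1..n-d}. expect n (\<lambda>h. \<Sum>i\<in>{1..K}. P h s i v / q h s i v))
      = (\<Sum>s\<in>{1..n-d}. expect n (\<lambda>h. \<Sum>v\<in>{1..N}. \<Sum>i\<in>{1..K}. P h s i v / q h s i v))"
    unfolding expect_sum by (rule sum.swap)
  also have "\<dots> \<le> (\<Sum>s\<in>{1..n-d}. expect n (\<lambda>_. G))"
    unfolding G_def by (intro sum_mono expect_mono sum_P_div_q_le)
  also have "\<dots> = real (n - d) * G" unfolding expect_const by simp
  also have "\<dots> \<le> real n * G" unfolding G_def by (intro mult_right_mono) auto
  finally show ?thesis unfolding G_def .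
qed

lemma regret_le:
  assumes N: "N \<ge> 1"
  shows "coop_regret E N K d \<eta> L n \<le> real d + ln (real K) / \<eta> + real n * \<eta> * real d * exp 1
     + \<eta> * exp 1 / 2 * real n * ((real K * real (alpha_pow E N d) + real N) / (1 - exp (-1)))
       / real N"
proof -
  define G where "G = (real K * real (alpha_pow E N d) + real N) / (1 - exp (-1))"
  define Q where "Q v = (\<Sum>s\<in>{1..n-d}. expect n (\<lambda>h. \<Sum>i\<in>{1..K}. P h s i v / q h s i v))" for v
  obtain k where k: "k \<in> {1..K}" "(\<Sum>t\<in>{1..n}. L t k) = Min ((\<lambda>i. \<Sum>t = 1..n. L t i) ` {1..K})"
    using Min_in[of "(\<lambda>i. \<Sum>t = 1..n. L t i) ` {1..K}"] K_ge_2 by fastforce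
  define C where "C = real d + ln (real K) / \<eta> + (\<Sum>t\<in>{1..n}. L t k) + real n * \<eta> * real d * exp 1"
  have "(\<Sum>v\<in>{1..N}. coop_exp_loss E N K d \<eta> L n v) \<le> (\<Sum>v\<in>{1..N}. C + \<eta> * exp 1 / 2 * Q v)"
    unfolding coop_exp_loss_eq_expect C_def Q_def by (intro sum_mono expected_loss_le k(1)) auto
  also have "\<dots> = real N * C + \<eta> * exp 1 / 2 * sum Q {1..N}"
    by (simp add: sum.distrib sum_distrib_left)
  also have "\<dots> \<le> real N * C + \<eta> * exp 1 / 2 * (real n * G)"
    using sum_expect_P_div_q_le eta_pos unfolding Q_def G_def
    by (intro add_left_mono mult_left_mono) auto
  finally have "(\<Sum>v\<in>{1..N}. coop_exp_loss E N K d \<eta> L n v) / real N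
      \<le> (real N * C + \<eta> * exp 1 / 2 * (real n * G)) / real N"
    using N by (intro divide_right_mono) auto
  also have "\<dots> = C + \<eta> * exp 1 / 2 * real n * G / real N"
    using N by (simp add: add_divide_distrib)
  finally show ?thesis unfolding coop_regret_def C_def G_def k(2)[symmetric] by linarith
qed

end

lemma coop_p_cong_loss:
  assumes "\<And>s i. s \<in> {1..T} \<Longrightarrow> L s i = L' s i"
  shows "t \<le> Suc T \<Longrightarrow> coop_p E N K d \<eta> L h t = coop_p E N K d \<eta> L' h t"
proof (induction t rule: less_induct)
  case (less t)
  show ?case
  proof (cases t)
    case (Suc t0)
    have IH: "coop_p E N K d \<eta> L h t0 = coop_p E N K d \<eta> L' h t0"
      "coop_p E N K d \<eta> L h (t0 - d) = coop_p E N K d \<eta> L' h (t0 - d)"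
      using less Suc by auto
    have "L (t0 - d) = L' (t0 - d)" if "d < t0"
      using that less.prems Suc by (intro ext assms) auto
    then show ?thesis unfolding Suc coop_p.simps(2) Let_def IH by (cases "d < t0") simp_all
  qed simp
qed

lemma coop_regret_cong_loss:
  assumes L: "\<And>s i. s \<in> {1..T} \<Longrightarrow> L s i = L' s i"
  shows "coop_regret E N K d \<eta> L T = coop_regret E N K d \<eta> L' T"
proof -
  have "coop_prob E N K d \<eta> L T h = coop_prob E N K d \<eta> L' T h" for h
    unfolding coop_prob_def using coop_p_cong_loss[OF L] by (intro prod.cong refl) auto
  then have loss: "coop_exp_loss E N K d \<eta> L T v = coop_exp_loss E N K d \<eta> L' T v" for v
    unfolding coop_exp_loss_def using L by (intro sum.cong refl arg_cong2[where f = "(*)"]) auto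
  have best: "(\<lambda>i. \<Sum>t=1..T. L t i) = (\<lambda>i. \<Sum>t=1..T. L' t i)" using L by (intro ext sum.cong) auto
  show ?thesis unfolding coop_regret_def loss best ..
qed

text \<open>The algorithm only ever reads the losses of rounds \<open>1..T\<close>, so they may be extended by \<open>0\<close>
  to satisfy the boundedness hypothesis of the locale at all rounds.\<close>

lemma coop_regret_le:
  assumes "\<And>u v. E u v \<Longrightarrow> E v u" and "K \<ge> 2" and "\<eta> > 0"
    and "\<eta> * real K * exp 1 * (real d + 1) \<le> 1"
    and L: "\<And>t i. t \<in> {1..T} \<Longrightarrow> i \<in> {1..K} \<Longrightarrow> 0 \<le> L t i \<and> L t i \<le> 1"
  shows "coop_regret E N K d \<eta> L T \<le> real d + ln (real K) / \<eta> + real T * \<eta> * real d * exp 1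
     + \<eta> * exp 1 / 2 * real T * ((real K * real (alpha_pow E N d) + real N) / (1 - exp (-1)))
       / real N"
proof (cases "N = 0")
  case True
  \<comment> \<open>with no agents the average loss is \<open>0 / 0 = 0\<close>, so the regret is minus the best loss\<close>
  have "0 \<le> Min ((\<lambda>i. \<Sum>t = 1..T. L t i) ` {1..K})"
    using assms(2) L by (subst Min_ge_iff) (auto intro!: sum_nonneg)
  moreover have "0 \<le> real d + ln (real K) / \<eta> + real T * \<eta> * real d * exp 1"
    using assms(2,3) by simp
  ultimately show ?thesis using True unfolding coop_regret_def by simp
next
  case False
  define L' where "L' t i = (if t \<in> {1..T} then L t i else 0)" for t i
  interpret exp3_coop E N K d \<eta> L'
    using assms unfolding L'_def by unfold_locales auto
  have "coop_regret E N K d \<eta> L T = coop_regret E N K d \<eta> L' T"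
    by (rule coop_regret_cong_loss) (simp add: L'_def)
  also have "\<dots> \<le> real d + ln (real K) / \<eta> + real T * \<eta> * real d * exp 1
     + \<eta> * exp 1 / 2 * real T * ((real K * real (alpha_pow E N d) + real N) / (1 - exp (-1)))
       / real N"
    using False by (intro regret_le) auto
  finally show ?thesis .
qed

lemma regret_bound_arith:
  fixes \<gamma> lnK a N K d T :: real
  assumes \<gamma>: "\<gamma> > 0" and K: "K > 0" and N: "N \<ge> 0" and d: "d \<ge> 0" and T: "T \<ge> 0"
  defines "\<eta> \<equiv> \<gamma> / (K * exp 1 * (d + 1))" and "c \<equiv> 1 - exp (-1)"
  shows "d + lnK / \<eta> + T * \<eta> * d * exp 1 + \<eta> * exp 1 / 2 * T * ((K * a + N) / c) / N
    \<le> 2 * d + K * exp 1 * (d + 1) * lnK / \<gamma> + \<gamma> * (a / (2 * c * (d + 1) * N) + 3 / (K * exp 1)) * T"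
proof -
  have e: "2 \<le> exp (1::real)" "exp (1::real) \<le> 3"
    using exp_ge_add_one_self[of "1::real"] exp_le by auto
  have c: "c = 1 - 1 / exp 1" "c > 0" unfolding c_def by (simp_all add: exp_minus field_simps)
  have \<eta>: "\<eta> > 0" unfolding \<eta>_def using \<gamma> K d by simp
  have \<gamma>_eq: "\<gamma> = \<eta> * (K * exp 1 * (d + 1))" unfolding \<eta>_def using K d by simp
  have "lnK / \<eta> = K * exp 1 * (d + 1) * lnK / \<gamma>" using \<eta> K d by (simp add: \<gamma>_eq)
  moreover have "\<eta> * exp 1 / 2 * T * ((K * a + N) / c) / N
      \<le> \<gamma> * (a / (2 * c * (d + 1) * N)) * T + T * (\<eta> * exp 1 / (2 * c))"
  proof (cases "N = 0")
    case True
    have "0 \<le> T * (\<eta> * exp 1 / (2 * c))" using \<eta> c(2) T by simp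
    then show ?thesis using True by simp
  next
    case False
    have "\<eta> * exp 1 / 2 * T * ((K * a + N) / c) / N
        = \<eta> * (K * exp 1 * D) * (a / (2 * c * D * N)) * T + T * (\<eta> * exp 1 / (2 * c))"
      if "D \<noteq> 0" for D
      using that False K c(2) by (simp add: field_simps)
    from this[of "d + 1"] show ?thesis using d unfolding \<gamma>_eq by simp
  qed
  moreover have "\<eta> * d * exp 1 + \<eta> * exp 1 / (2 * c) \<le> \<gamma> * (3 / (K * exp 1))"
  proof -
    have "exp 1 * exp 1 \<le> 6 * exp 1 - (6::real)"
      using mult_nonneg_nonpos[of "exp 1 - 2" "exp 1 - (3::real)"] e
      by (simp add: algebra_simps)
    then have "exp 1 \<le> 6 * c" unfolding c(1) using e by (simp add: field_simps)
    then have "exp 1 / (2 * c) \<le> 3" using c(2) by (simp add: field_simps)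
    then have "\<eta> * d * exp 1 + \<eta> * (exp 1 / (2 * c)) \<le> \<eta> * d * 3 + \<eta> * 3"
      using \<eta> d e by (intro add_mono mult_left_mono) auto
    also have "\<dots> = \<gamma> * (3 / (K * exp 1))" using K d by (simp add: \<gamma>_eq field_simps)
    finally show ?thesis by simp
  qed
  then have "T * (\<eta> * d * exp 1 + \<eta> * exp 1 / (2 * c)) \<le> T * (\<gamma> * (3 / (K * exp 1)))"
    by (rule mult_left_mono[OF _ T])
  ultimately show ?thesis using d by (simp add: algebra_simps)
qed

theorem theorem1:
  fixes E :: "nat \<Rightarrow> nat \<Rightarrow> bool" and N K d T :: nat and \<gamma> :: real
    and L :: "nat \<Rightarrow> nat \<Rightarrow> real"
  assumes "\<And>u v. E u v \<Longrightarrow> u \<in> {1..N} \<and> v \<in> {1..N}"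
    and "\<And>u v. E u v \<Longrightarrow> E v u"
    and "\<And>u. \<not> E u u"
    and "connected_graph E N"
    and "K \<ge> 2"
    and "0 < \<gamma>" and "\<gamma> \<le> 1"
    and "T \<ge> 1"
    and "\<And>t i. t \<in> {1..T} \<Longrightarrow> i \<in> {1..K} \<Longrightarrow> 0 \<le> L t i \<and> L t i \<le> 1"
  shows "coop_regret E N K d (\<gamma> / (real K * exp 1 * (real d + 1))) L T
    \<le> 2 * real d + real K * exp 1 * (real d + 1) * ln (real K) / \<gamma>
       + \<gamma> * (real (alpha_pow E N d) / (2 * (1 - exp (-1)) * (real d + 1) * real N)
               + 3 / (real K * exp 1)) * real T"
proof -
  \<comment> \<open>of the graph hypotheses only symmetry is needed\<close>
  define \<eta> where "\<eta> = \<gamma> / (real K * exp 1 * (real d + 1))"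
  have "\<eta> > 0" unfolding \<eta>_def using assms(5,6) by simp
  moreover have "\<eta> * real K * exp 1 * (real d + 1) \<le> 1"
    unfolding \<eta>_def using assms(5,7) by simp
  ultimately have "coop_regret E N K d \<eta> L T
      \<le> real d + ln (real K) / \<eta> + real T * \<eta> * real d * exp 1
        + \<eta> * exp 1 / 2 * real T * ((real K * real (alpha_pow E N d) + real N) / (1 - exp (-1)))
          / real N"
    using assms(2,5,9) by (intro coop_regret_le)
  also have "\<dots> \<le> 2 * real d + real K * exp 1 * (real d + 1) * ln (real K) / \<gamma>
       + \<gamma> * (real (alpha_pow E N d) / (2 * (1 - exp (-1)) * (real d + 1) * real N)
               + 3 / (real K * exp 1)) * real T"
    unfolding \<eta>_def using assms(5,6) by (intro regret_bound_arith) auto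
  finally show ?thesis unfolding \<eta>_def .
qed

end
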